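(* Let $(X_t)_{t\ge 0}$ be the gamma process with parameters $a=b=1$, so that for each $t>0$ the random variable $X_t$ has density $x^{t-1}e^{-x}/\Gamma(t)$ on $(0,\infty)$. Then for every $N\in\mathbb{N}$ there is a constant $C_N$ such that for all sufficiently large $t$, \[ \bigl|\,\mathbb{E}\,\zeta(1/2+iX_t) - 1\,\bigr| \le C_N\, t^{-N}, \] i.e. $\mathbb{E}\,\zeta(1/2+iX_t) = 1 + O(t^{-N})$.
   Context: $\zeta$ denotes the Riemann zeta function. The gamma process with parameters $a=b=1$ has time-$t$ marginal with density $x^{t-1}e^{-x}/\Gamma(t)$ on $(0,\infty)$ and characteristic function $\mathbb{E}e^{iuX_t}=(1-iu)^{-t}$. *)

theory Defs
  imports "HOL-Probability.Probability"
begin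

text \<open>Riemann zeta function: the value at s of the (unique) holomorphic continuation
  to the punctured plane of the Dirichlet series sum n^(-s), Re s > 1.
  (At s = 1 the value is unspecified.)\<close>
definition riemann_zeta :: "complex \<Rightarrow> complex" where
  "riemann_zeta s = (THE z. \<exists>f. f holomorphic_on (- {1}) \<and>
       (\<forall>w. 1 < Re w \<longrightarrow> f w = (\<Sum>n. 1 / (of_nat (Suc n)) powr w)) \<and> f s = z)"

definition gamma_density :: "real \<Rightarrow> real \<Rightarrow> real" where
  "gamma_density t x = (if 0 < x then x powr (t - 1) * exp (- x) / Gamma t else 0)"

end

theory Submission
  imports Defs "HOL-Complex_Analysis.Complex_Analysis" "HOL-Real_Asymp.Real_Asymp"
begin

text \<open>
  Let \<open>T\<^sub>n(s) = n^-s - \<integral>\<^sub>n\<^sup>n\<^sup>+\<^sup>1 x^-s dx\<close>. For \<open>Re s > 1\<close> these terms telescope to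
  \<open>\<Sum>\<^sub>n\<^sub>\<ge>\<^sub>2 T\<^sub>n(s) = \<zeta>(s) - 1 - 2^(1-s)/(s-1)\<close>, while the binomial series expands \<open>T\<^sub>n(s)\<close>
  in the powers \<open>n^(-s-k-1)\<close>, \<open>k \<ge> 0\<close>. Summing over \<open>n\<close> expresses \<open>(s - 1)(\<zeta>(s) - 1)\<close>
  through the values \<open>\<zeta>(s + k + 1) - 1\<close>, a recursion that continues \<open>\<zeta>\<close> to \<open>\<complex> - {1}\<close> one
  vertical strip at a time. Since \<open>|T\<^sub>n(s)| \<le> |s| n^(-Re s - 1)\<close>, the telescoped series also shows
  \<open>|\<zeta>(s) - 1| = O(|s|)\<close> for \<open>Re s \<ge> 1/2\<close> away from the pole, and \<open>\<zeta>(s) - 1 = O(2^-Re s)\<close>.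

  The expectation is \<open>1 + \<Gamma>(t)\<^sup>-\<^sup>1 \<integral>\<^sub>0\<^sup>\<infinity> (\<zeta>(1/2 + ix) - 1) x^(t-1) e^-x dx\<close>. By Cauchy's theorem
  the ray of integration may be turned to the direction \<open>w = (1 - i)/c\<close>, \<open>c = 1 + ln 2\<close>. On the
  rotated ray \<open>Re (1/2 + iwx) = 1/2 + x/c\<close>, and the decay \<open>2^(-x/c)\<close> of \<open>\<zeta> - 1\<close> makes up exactly
  for the loss \<open>|e^-wx| = e^(-x/c)\<close>. The rotated integrand is therefore bounded by a multiple of
  \<open>|w|^t (1 + x) x^(t-1) e^-x\<close>, so the error is \<open>O((1 + t) |w|^t)\<close> with \<open>|w| = \<surd>2/(1 + ln 2) < 1\<close>.
\<close>

lemma norm_of_nat_powr: "norm (of_nat m powr (s::complex)) = real m powr Re s"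
  by (subst norm_powr_real_powr) auto

lemma norm_two_plus_nat_powr [simp]: "norm ((2 + of_nat n :: complex) powr s) = (2 + real n) powr Re s"
  using norm_of_nat_powr[of "n+2" s] by (simp add: add.commute)

lemma summable_powr_plus2: "p < -1 \<Longrightarrow> summable (\<lambda>n. real (n+2) powr p)"
proof -
  assume "p < -1"
  hence "summable (\<lambda>n. real n powr p)" by (simp add: summable_real_powr_iff)
  from summable_ignore_initial_segment[OF this, of 2] show ?thesis by simp
qed

definition tail_sum :: "real \<Rightarrow> real" where "tail_sum p = (\<Sum>n. real (n+2) powr (- p))"

lemma tail_sum_nonneg: "1 < p \<Longrightarrow> 0 \<le> tail_sum p"
  unfolding tail_sum_def by (rule suminf_nonneg[OF summable_powr_plus2]) auto

lemma powr_minus_Suc_split: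
  assumes "0 < (m::real)"
  shows "m powr (-(\<sigma> + real j + 1)) = m powr (-\<sigma>) * (1/m)^(Suc j)"
proof -
  have "m powr (-(\<sigma> + real j + 1)) = m powr (-\<sigma>) * m powr (- real (Suc j))"
    by (subst powr_add[symmetric]) (simp add: algebra_simps)
  also have "m powr (- real (Suc j)) = (1/m)^(Suc j)"
  proof -
    have "m powr real (Suc j) = m^(Suc j)" using assms by (rule powr_realpow)
    thus ?thesis by (simp only: powr_minus power_one_over inverse_eq_divide)
  qed
  finally show ?thesis .
qed

lemma infsum_eq_suminf:
  fixes f :: "nat \<Rightarrow> 'a::banach"
  assumes "summable (\<lambda>n. norm (f n))"
  shows "infsum f UNIV = suminf f"
  by (rule infsumI[OF norm_summable_imp_has_sum[OF assms summable_sums[OF summable_norm_cancel[OF assms]]]])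

lemma summable_on_pairs_if_abs_summable_rows:
  fixes a :: "nat \<Rightarrow> nat \<Rightarrow> complex"
  assumes rows: "\<And>n. summable (\<lambda>j. norm (a n j))"
    and bnd: "summable (\<lambda>n. \<Sum>j. norm (a n j))"
  shows "(\<lambda>(n,j). a n j) summable_on UNIV \<times> UNIV"
proof -
  have rows': "infsum (\<lambda>j. norm (a n j)) UNIV = (\<Sum>j. norm (a n j))" for n
    by (rule infsum_eq_suminf) (simp add: rows)
  have nn: "0 \<le> (\<Sum>j. norm (a n j))" for n by (rule suminf_nonneg[OF rows]) simp
  have "(\<lambda>x. norm ((\<lambda>(n,j). a n j) x)) summable_on Sigma UNIV (\<lambda>_. UNIV)"
  proof (rule Infinite_Sum.abs_summable_on_Sigma_iff[THEN iffD2], intro conjI ballI)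
    show "(\<lambda>y. norm ((\<lambda>(n, j). a n j) (x, y))) summable_on UNIV" for x
      using norm_summable_imp_summable_on[of "\<lambda>y. norm (a x y)"] rows by simp
    have "(\<lambda>n. (\<Sum>j. norm (a n j))) summable_on UNIV"
      by (rule norm_summable_imp_summable_on) (simp only: real_norm_def abs_of_nonneg[OF nn] bnd)
    thus "(\<lambda>x. norm (\<Sum>\<^sub>\<infinity>y\<in>UNIV. norm ((\<lambda>(n, j). a n j) (x, y)))) summable_on UNIV"
      by (simp only: case_prod_conv rows' real_norm_def abs_of_nonneg[OF nn])
  qed
  thus ?thesis by (subst summable_on_iff_abs_summable_on_complex) simp
qed

lemma sums_suminf_swap:
  fixes a :: "nat \<Rightarrow> nat \<Rightarrow> complex"
  assumes rows: "\<And>n. summable (\<lambda>j. norm (a n j))"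
    and bnd: "summable (\<lambda>n. \<Sum>j. norm (a n j))"
  shows "(\<lambda>n. \<Sum>j. a n j) sums (\<Sum>j. \<Sum>n. a n j)"
proof -
  have S: "(\<lambda>(n,j). a n j) summable_on UNIV \<times> UNIV"
    by (rule summable_on_pairs_if_abs_summable_rows[OF rows bnd])
  have S2: "(\<lambda>(j,n). a n j) summable_on UNIV \<times> UNIV"
    using S summable_on_swap[of "\<lambda>(n,j). a n j" UNIV UNIV] by (simp add: case_prod_unfold)
  have cols: "summable (\<lambda>n. norm (a n j))" for j
  proof (rule summable_comparison_test[OF _ bnd], intro exI allI impI)
    fix n :: nat
    have "norm (a n j) = (\<Sum>i\<in>{j}. norm (a n i))" by simp
    also have "\<dots> \<le> (\<Sum>i. norm (a n i))"
      by (rule sum_le_suminf[OF rows]) simp_all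
    finally show "norm (norm (a n j)) \<le> (\<Sum>i. norm (a n i))" by simp
  qed
  have eq1: "infsum (\<lambda>j. a n j) UNIV = (\<Sum>j. a n j)" for n by (rule infsum_eq_suminf) (rule rows)
  have eq2: "infsum (\<lambda>n. a n j) UNIV = (\<Sum>n. a n j)" for j by (rule infsum_eq_suminf) (rule cols)
  have "(\<lambda>n. infsum (\<lambda>j. a n j) UNIV) sums infsum (\<lambda>n. infsum (\<lambda>j. a n j) UNIV) UNIV"
    using summable_on_Sigma_banach[of "\<lambda>n j. a n j" UNIV "\<lambda>_. UNIV"] S
    by (intro has_sum_imp_sums has_sum_infsum) simp
  also have "infsum (\<lambda>n. infsum (\<lambda>j. a n j) UNIV) UNIV = infsum (\<lambda>j. infsum (\<lambda>n. a n j) UNIV) UNIV"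
    by (rule infsum_swap_banach) (use S in simp)
  also have "\<dots> = (\<Sum>j. \<Sum>n. a n j)"
    using summable_on_Sigma_banach[of "\<lambda>j n. a n j" UNIV "\<lambda>_. UNIV"] S2
    by (intro sums_unique has_sum_imp_sums has_sum_infsum) (simp add: eq2)
  finally show ?thesis unfolding eq1 .
qed

lemma pochhammer_nonneg_if_nonneg: "0 \<le> (x::'a::linordered_semidom) \<Longrightarrow> 0 \<le> pochhammer x n"
  by (simp add: pochhammer_prod prod_nonneg)

lemma pochhammer_mono:
  "0 \<le> (a::'a::linordered_semidom) \<Longrightarrow> a \<le> b \<Longrightarrow> pochhammer a n \<le> pochhammer b n"
  unfolding pochhammer_prod by (intro prod_mono) auto

lemma norm_pochhammer_le: "norm (pochhammer (s::'a::real_normed_field) k) \<le> pochhammer (norm s) k"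
proof (induction k)
  case (Suc k)
  have "norm (pochhammer s (Suc k)) = norm (pochhammer s k) * norm (s + of_nat k)"
    by (simp add: pochhammer_Suc norm_mult)
  also have "\<dots> \<le> pochhammer (norm s) k * (norm s + of_nat k)"
    by (intro mult_mono Suc.IH) (auto intro: norm_triangle_le pochhammer_nonneg_if_nonneg)
  also have "\<dots> = pochhammer (norm s) (Suc k)" by (simp add: pochhammer_Suc)
  finally show ?case .
qed simp

lemma negative_binomial_series:
  fixes x r :: real
  assumes "0 \<le> x" "x < 1"
  shows "(\<lambda>i. pochhammer r i / fact i * x^i) sums (1-x) powr (-r)"
proof -
  have "(\<lambda>i. ((-r) gchoose i) * (-x)^i) sums (1 + -x) powr (-r)"
    by (rule gen_binomial_real) (use assms in auto)
  moreover have "((-r) gchoose i) * (-x)^i = pochhammer r i / fact i * x^i" for i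
  proof -
    have m: "(-1::real)^i * (-1)^i = 1" by (simp flip: power_mult_distrib)
    have "((-r) gchoose i) * (-x)^i = ((-1)^i * (-1)^i) * (pochhammer r i / fact i * x^i)"
      unfolding gbinomial_pochhammer power_minus[of x] by simp
    thus ?thesis unfolding m by simp
  qed
  ultimately show ?thesis by simp
qed

lemma holomorphic_on_suminf:
  fixes f :: "nat \<Rightarrow> complex \<Rightarrow> complex"
  assumes S: "open S" and hol: "\<And>n. f n holomorphic_on S" and M: "summable M"
    and bnd: "\<forall>\<^sub>F n in sequentially. \<forall>x\<in>S. norm (f n x) \<le> M n"
  shows "(\<lambda>x. \<Sum>n. f n x) holomorphic_on S"
proof -
  have d: "\<And>n x. x \<in> S \<Longrightarrow> (f n has_field_derivative deriv (f n) x) (at x)"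
    using hol S by (blast intro: holomorphic_derivI)
  obtain g g' where g: "\<forall>x\<in>S. ((\<lambda>n. f n x) sums g x) \<and> ((\<lambda>n. deriv (f n) x) sums g' x) \<and> (g has_field_derivative g' x) (at x)"
    using series_and_derivative_comparison[OF S M d bnd] by metis
  have "g holomorphic_on S" using g S by (auto simp: holomorphic_on_open)
  moreover have "\<And>x. x \<in> S \<Longrightarrow> g x = (\<Sum>n. f n x)" using g sums_unique by blast
  ultimately show ?thesis by (rule holomorphic_transform)
qed

lemma holomorphic_on_locally:
  assumes S: "open S" and loc: "\<And>x. x \<in> S \<Longrightarrow> \<exists>T. open T \<and> x \<in> T \<and> T \<subseteq> S \<and> f holomorphic_on T"
  shows "f holomorphic_on S"
  unfolding holomorphic_on_open[OF S]
proof
  fix x assume "x \<in> S"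
  then obtain T where T: "open T" "x \<in> T" "T \<subseteq> S" "f holomorphic_on T" using loc by blast
  thus "\<exists>f'. (f has_field_derivative f') (at x)" by (auto simp: holomorphic_on_open)
qed

lemma norm_diff_le_real_segment:
  fixes f f' :: "complex \<Rightarrow> complex"
  assumes ab: "a \<le> b"
    and d: "\<And>u. a \<le> u \<Longrightarrow> u \<le> b \<Longrightarrow> (f has_field_derivative f' (of_real u)) (at (of_real u))"
    and bd: "\<And>u. a \<le> u \<Longrightarrow> u \<le> b \<Longrightarrow> norm (f' (of_real u)) \<le> B"
  shows "norm (f (of_real b) - f (of_real a)) \<le> B * (b - a)"
proof -
  let ?S = "of_real ` {a..b} :: complex set"
  have "norm (f (of_real b) - f (of_real a)) \<le> B * norm (of_real b - of_real a :: complex)"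
  proof (rule field_differentiable_bound[where f' = f'])
    show "convex ?S" by (rule convex_linear_image) auto
    show "(f has_field_derivative f' z) (at z within ?S)" if "z \<in> ?S" for z
      using that d by (auto intro: has_field_derivative_at_within)
    show "norm (f' z) \<le> B" if "z \<in> ?S" for z using that bd by auto
  qed (use ab in auto)
  also have "norm (of_real b - of_real a :: complex) = b - a"
    using ab by (simp flip: of_real_diff)
  finally show ?thesis .
qed

lemma of_real_pos_notin_nonpos_Reals: "0 < u \<Longrightarrow> (of_real u :: complex) \<notin> \<real>\<^sub>\<le>\<^sub>0"
  by (simp add: complex_nonpos_Reals_iff)

lemma norm_of_real_powr: "0 \<le> u \<Longrightarrow> norm ((of_real u :: complex) powr z) = u powr Re z"
  by (subst norm_powr_real_powr) auto

lemma powr_2_half_le: "2 powr (1/2) \<le> (3/2::real)"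
proof -
  have "2 powr (1/2) = sqrt (2::real)" by (simp add: powr_half_sqrt)
  also have "sqrt 2 \<le> sqrt ((3/2)^2)" by (rule real_sqrt_le_mono) (simp add: power2_eq_square)
  also have "\<dots> = 3/2" by simp
  finally show ?thesis .
qed

lemma integral_atLeast_tendsto:
  fixes g :: "real \<Rightarrow> complex"
  assumes g: "g absolutely_integrable_on {0..}"
  shows "((\<lambda>R. integral {0..R} g) \<longlongrightarrow> integral {0..} g) at_top"
proof -
  have "((\<lambda>b. set_lebesgue_integral lebesgue {0..b} g) \<longlongrightarrow> set_lebesgue_integral lebesgue {0..} g) at_top"
    by (rule tendsto_set_lebesgue_integral_at_top[OF _ g]) simp
  moreover have "(\<lambda>b. set_lebesgue_integral lebesgue {0..b} g) = (\<lambda>b. integral {0..b} g)"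
    by (rule ext, rule set_lebesgue_integral_eq_integral(2), rule absolutely_integrable_on_subinterval[OF g]) auto
  moreover have "set_lebesgue_integral lebesgue {0..} g = integral {0..} g"
    by (rule set_lebesgue_integral_eq_integral(2)[OF g])
  ultimately show ?thesis by simp
qed

lemma lborel_integral_indicator_atLeast:
  fixes g :: "real \<Rightarrow> complex"
  assumes g: "g absolutely_integrable_on {0..}" and gc: "continuous_on {0..} g"
  shows "integrable lborel (\<lambda>x. indicator {0..} x *\<^sub>R g x)"
    and "(\<integral>x. indicator {0..} x *\<^sub>R g x \<partial>lborel) = integral {0..} g"
proof -
  have m: "(\<lambda>x. indicator {0..} x *\<^sub>R g x) \<in> borel_measurable borel"
    by (rule borel_measurable_continuous_on_indicator) (use gc in auto)
  show "integrable lborel (\<lambda>x. indicator {0..} x *\<^sub>R g x)"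
    using g m unfolding set_integrable_def by (subst (asm) integrable_completion) auto
  have "(\<integral>x. indicator {0..} x *\<^sub>R g x \<partial>lborel) = (\<integral>x. indicator {0..} x *\<^sub>R g x \<partial>lebesgue)"
    by (rule integral_completion[symmetric]) (use m in simp)
  also have "\<dots> = set_lebesgue_integral lebesgue {0..} g" by (simp add: set_lebesgue_integral_def)
  also have "\<dots> = integral {0..} g" by (rule set_lebesgue_integral_eq_integral(2)[OF g])
  finally show "(\<integral>x. indicator {0..} x *\<^sub>R g x \<partial>lborel) = integral {0..} g" .
qed

section \<open>The tail of the zeta series\<close>

definition zeta_tail :: "complex \<Rightarrow> complex" where
  "zeta_tail s = (\<Sum>n. of_nat (n+2) powr (-s))"

lemma summable_norm_zeta_tail_terms: "1 < Re s \<Longrightarrow> summable (\<lambda>n. norm (of_nat (n+2) powr (-s) :: complex))"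
  unfolding norm_of_nat_powr by (rule summable_powr_plus2) simp

lemma zeta_tail_sums: "1 < Re s \<Longrightarrow> (\<lambda>n. of_nat (n+2) powr (-s)) sums zeta_tail s"
  unfolding zeta_tail_def by (rule summable_sums, rule summable_norm_cancel, rule summable_norm_zeta_tail_terms)

lemma zeta_tail_holomorphic: "zeta_tail holomorphic_on {s. 1 < Re s}"
proof (rule holomorphic_on_locally)
  show "open {s. 1 < Re s}" by (rule open_halfspace_Re_gt)
  fix x assume x: "x \<in> {s. 1 < Re s}"
  define e where "e = (Re x - 1) / 2"
  have e: "0 < e" using x by (simp add: e_def)
  have "(\<lambda>s. \<Sum>n. of_nat (n+2) powr (-s)) holomorphic_on {s. 1 + e < Re s}"
  proof (rule holomorphic_on_suminf)
    show "open {s. 1 + e < Re s}" by (rule open_halfspace_Re_gt)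
    show "(\<lambda>s. of_nat (n+2) powr (-s)) holomorphic_on {s. 1 + e < Re s}" for n
      by (intro holomorphic_intros)
    show "summable (\<lambda>n. real (n+2) powr (-(1+e)))" by (rule summable_powr_plus2) (use e in simp)
    show "\<forall>\<^sub>F n in sequentially. \<forall>s\<in>{s. 1 + e < Re s}. norm (of_nat (n+2) powr (-s) :: complex) \<le> real (n+2) powr (-(1+e))"
      by (intro always_eventually allI ballI) (auto simp: norm_of_nat_powr intro!: powr_mono)
  qed
  moreover have "{s. 1 + e < Re s} \<subseteq> {s. 1 < Re s}" using e by auto
  moreover have "x \<in> {s. 1 + e < Re s}" using x by (auto simp: e_def field_simps)
  ultimately show "\<exists>T. open T \<and> x \<in> T \<and> T \<subseteq> {s. 1 < Re s} \<and> zeta_tail holomorphic_on T"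
    by (intro exI[of _ "{s. 1 + e < Re s}"]) (auto simp: zeta_tail_def[abs_def] open_halfspace_Re_gt)
qed

lemma norm_zeta_tail_le:
  assumes s: "2 \<le> Re s"
  shows "norm (zeta_tail s) \<le> 4 * tail_sum 2 * 2 powr (-Re s)"
proof -
  have sm: "summable (\<lambda>n. norm (of_nat (n+2) powr (-s) :: complex))"
    by (rule summable_norm_zeta_tail_terms) (use s in simp)
  have sm2: "summable (\<lambda>n. real (n+2) powr (-2))" by (rule summable_powr_plus2) simp
  have le: "norm (of_nat (n+2) powr (-s) :: complex) \<le> real (n+2) powr (-2) * 2 powr (2 - Re s)" for n
  proof -
    have "norm (of_nat (n+2) powr (-s) :: complex) = real (n+2) powr (-2) * real (n+2) powr (2 - Re s)"
      by (simp add: norm_of_nat_powr flip: powr_add)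
    also have "real (n+2) powr (2 - Re s) \<le> 2 powr (2 - Re s)"
      by (rule powr_mono2') (use s in auto)
    finally show ?thesis by (simp add: mult_left_mono)
  qed
  have "norm (zeta_tail s) \<le> (\<Sum>n. norm (of_nat (n+2) powr (-s) :: complex))"
    unfolding zeta_tail_def by (rule summable_norm[OF sm])
  also have "\<dots> \<le> (\<Sum>n. real (n+2) powr (-2) * 2 powr (2 - Re s))"
    by (rule suminf_le[OF le sm summable_mult2[OF sm2]])
  also have "\<dots> = tail_sum 2 * 2 powr (2 - Re s)" unfolding tail_sum_def by (rule suminf_mult2[symmetric, OF sm2])
  also have "2 powr (2 - Re s) = 4 * 2 powr (- Re s)" by (simp add: powr_diff powr_minus field_simps)
  finally show ?thesis by (simp add: mult_ac)
qed

section \<open>The Euler--Maclaurin terms\<close>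

text \<open>\<open>em_term n s\<close> is \<open>n^-s - \<integral>\<^sub>n\<^sup>n\<^sup>+\<^sup>1 x^-s dx\<close>.\<close>

definition em_term :: "nat \<Rightarrow> complex \<Rightarrow> complex" where
  "em_term n s = of_nat n powr (-s) - ((of_nat n + 1) powr (1 - s) - of_nat n powr (1 - s)) / (1 - s)"

definition em_coeff :: "nat \<Rightarrow> complex \<Rightarrow> complex" where
  "em_coeff j s = ((-s) gchoose (Suc j)) / of_nat (j+2)"

lemma norm_em_coeff_le: "norm (em_coeff j s) \<le> pochhammer (norm s) (Suc j) / fact (Suc j)"
proof -
  have n2: "norm (of_nat (j+2) :: complex) = real (j+2)" by (rule norm_of_nat)
  have n1: "cmod (1 + of_nat j) = 1 + real j" using norm_of_nat[of "Suc j", where 'a=complex] by simp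
  have "norm (em_coeff j s) = norm ((-1) ^ Suc j * pochhammer s (Suc j) / fact (Suc j)) / norm (of_nat (j+2) :: complex)"
    unfolding em_coeff_def gbinomial_pochhammer norm_divide by simp
  also have "\<dots> = norm (pochhammer s (Suc j)) / fact (Suc j) / real (j+2)"
    unfolding n2 by (simp add: norm_divide norm_mult norm_power norm_fact n1)
  also have "\<dots> \<le> norm (pochhammer s (Suc j)) / fact (Suc j)"
    by (rule order_trans[OF divide_left_mono[of 1 "real (j+2)"]]) auto
  also have "\<dots> \<le> pochhammer (norm s) (Suc j) / fact (Suc j)"
    by (intro divide_right_mono norm_pochhammer_le) auto
  finally show ?thesis .
qed

lemma em_term_expansion:
  assumes n: "2 \<le> n" and s: "s \<noteq> 1"
  shows "(\<lambda>j. em_coeff j s * of_nat n powr (-(s + of_nat j + 1))) sums (- em_term n s)"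
proof -
  define x where "x = (of_nat n :: complex)"
  have s1: "1 - s \<noteq> 0" using s by auto
  have h1: "(\<lambda>j. ((1-s) gchoose j) * x powr (1 - s - of_nat j)) sums ((x+1) powr (1-s))"
    using gen_binomial_complex''[of 1 "real n" "1-s"] n by (simp add: x_def add.commute)
  have h2: "(\<lambda>j. ((1-s) gchoose Suc j) * x powr (1 - s - of_nat (Suc j))) sums ((x+1) powr (1-s) - x powr (1-s))"
    using h1 by (subst sums_Suc_iff) simp
  have e1: "((1-s) gchoose Suc j) * x powr (1 - s - of_nat (Suc j)) / (1-s)
            = ((-s) gchoose j) / of_nat (Suc j) * x powr (1 - s - of_nat (Suc j))" for j
  proof -
    have "of_nat (Suc j) * ((1-s) gchoose Suc j) = (1-s) * ((1 - s - 1) gchoose j)"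
      by (rule gbinomial_absorption)
    hence A: "((1-s) gchoose Suc j) = (1-s) * ((-s) gchoose j) / of_nat (Suc j)"
      by (subst eq_divide_eq) (auto simp: mult.commute simp del: of_nat_Suc)
    show ?thesis unfolding A using s1 by simp
  qed
  have h3: "(\<lambda>j. ((-s) gchoose j) / of_nat (Suc j) * x powr (1 - s - of_nat (Suc j)))
             sums (((x+1) powr (1-s) - x powr (1-s)) / (1-s))"
    using sums_divide[OF h2, of "1-s"] unfolding e1 .
  have h4: "(\<lambda>j. ((-s) gchoose Suc j) / of_nat (Suc (Suc j)) * x powr (1 - s - of_nat (Suc (Suc j))))
             sums (((x+1) powr (1-s) - x powr (1-s)) / (1-s) - x powr (-s))"
    using h3 by (subst sums_Suc_iff) simp
  have e2: "((-s) gchoose Suc j) / of_nat (Suc (Suc j)) * x powr (1 - s - of_nat (Suc (Suc j)))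
           = em_coeff j s * x powr (-(s + of_nat j + 1))" for j
    unfolding em_coeff_def by (simp add: algebra_simps)
  have e3: "((x+1) powr (1-s) - x powr (1-s)) / (1-s) - x powr (-s) = - em_term n s"
    unfolding em_term_def x_def by simp
  have "(\<lambda>j. em_coeff j s * x powr (-(s + of_nat j + 1))) sums (- em_term n s)" using h4 unfolding e2 e3 .
  thus ?thesis unfolding x_def .
qed

lemma em_expansion_row_bound:
  assumes m: "2 \<le> m"
  shows "summable (\<lambda>j. norm (em_coeff j s) * real m powr (-(Re s + real j + 1)))"
    and "(\<Sum>j. norm (em_coeff j s) * real m powr (-(Re s + real j + 1))) \<le> 2 powr (norm s) * real m powr (-Re s)"
proof -
  define x where "x = 1 / real m"
  define P where "P i = pochhammer (norm s) i / fact i" for i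
  have x: "0 \<le> x" "x \<le> 1/2" using m by (auto simp: x_def field_simps)
  have bs: "(\<lambda>i. P i * x^i) sums (1-x) powr (-norm s)"
    unfolding P_def by (rule negative_binomial_series) (use x in auto)
  have bs1: "(\<lambda>j. P (Suc j) * x^(Suc j)) sums ((1-x) powr (-norm s) - 1)"
    using bs by (subst sums_Suc_iff) (simp add: P_def)
  define u where "u j = real m powr (-Re s) * (P (Suc j) * x^(Suc j))" for j
  have us: "u sums (real m powr (-Re s) * ((1-x) powr (-norm s) - 1))"
    unfolding u_def by (rule sums_mult[OF bs1])
  have le: "norm (em_coeff j s) * real m powr (-(Re s + real j + 1)) \<le> u j" for j
  proof -
    have "real m powr (-(Re s + real j + 1)) = real m powr (-Re s) * x^(Suc j)"
      unfolding x_def by (rule powr_minus_Suc_split) (use m in auto)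
    moreover have "norm (em_coeff j s) \<le> P (Suc j)" unfolding P_def by (rule norm_em_coeff_le)
    moreover have "norm (em_coeff j s) * (real m powr (-Re s) * x^(Suc j)) \<le> P (Suc j) * (real m powr (-Re s) * x^(Suc j))"
      by (rule mult_right_mono[OF \<open>norm (em_coeff j s) \<le> P (Suc j)\<close>]) (use x in simp)
    ultimately show ?thesis unfolding u_def by (simp add: mult_ac)
  qed
  have nn: "0 \<le> norm (em_coeff j s) * real m powr (-(Re s + real j + 1))" for j by simp
  show sm: "summable (\<lambda>j. norm (em_coeff j s) * real m powr (-(Re s + real j + 1)))"
    by (rule summable_comparison_test[OF _ sums_summable[OF us]]) (use le nn in auto)
  have "(\<Sum>j. norm (em_coeff j s) * real m powr (-(Re s + real j + 1))) \<le> (\<Sum>j. u j)"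
    by (rule suminf_le[OF le sm sums_summable[OF us]])
  also have "\<dots> = real m powr (-Re s) * ((1-x) powr (-norm s) - 1)" using us by (rule sums_unique[symmetric])
  also have "\<dots> \<le> real m powr (-Re s) * 2 powr (norm s)"
  proof (intro mult_left_mono)
    have "(1-x) powr (-norm s) \<le> (1/2) powr (-norm s)"
      by (rule powr_mono2') (use x in auto)
    also have "(1/2::real) powr (-norm s) = 2 powr (norm s)"
      by (simp add: powr_minus_divide powr_divide)
    finally show "(1-x) powr (-norm s) - 1 \<le> 2 powr (norm s)" by simp
  qed simp
  finally show "(\<Sum>j. norm (em_coeff j s) * real m powr (-(Re s + real j + 1))) \<le> 2 powr (norm s) * real m powr (-Re s)"
    by (simp add: mult_ac)
qed

lemma em_term_sums_coeff_series:
  assumes s: "1 < Re s"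
  shows "(\<lambda>n. em_term (n+2) s) sums (- (\<Sum>j. em_coeff j s * zeta_tail (s + of_nat j + 1)))"
proof -
  define a where "a n j = em_coeff j s * of_nat (n+2) powr (-(s + of_nat j + 1))" for n j
  have s1: "s \<noteq> 1" using s by auto
  have na: "norm (a n j) = norm (em_coeff j s) * real (n+2) powr (-(Re s + real j + 1))" for n j
    unfolding a_def norm_mult norm_of_nat_powr by simp
  have rows: "summable (\<lambda>j. norm (a n j))" for n
    unfolding na by (rule em_expansion_row_bound) simp
  have rowsum: "(\<Sum>j. a n j) = - em_term (n+2) s" for n
    using em_term_expansion[of "n+2" s] s1 unfolding a_def by (simp add: sums_iff)
  have colsum: "(\<Sum>n. a n j) = em_coeff j s * zeta_tail (s + of_nat j + 1)" for j
  proof -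
    have "(\<lambda>n. of_nat (n+2) powr (-(s + of_nat j + 1))) sums zeta_tail (s + of_nat j + 1)"
      by (rule zeta_tail_sums) (use s in simp)
    from sums_mult[OF this, of "em_coeff j s"] show ?thesis unfolding a_def by (simp add: sums_iff)
  qed
  have bnd: "summable (\<lambda>n. \<Sum>j. norm (a n j))"
  proof (rule summable_comparison_test)
    show "summable (\<lambda>n. 2 powr (norm s) * real (n+2) powr (-Re s))"
      by (rule summable_mult, rule summable_powr_plus2) (use s in simp)
    show "\<exists>N. \<forall>n\<ge>N. norm (\<Sum>j. norm (a n j)) \<le> 2 powr (norm s) * real (n+2) powr (-Re s)"
    proof (intro exI allI impI)
      fix n :: nat
      have "0 \<le> (\<Sum>j. norm (a n j))" by (rule suminf_nonneg[OF rows]) simp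
      moreover have "(\<Sum>j. norm (a n j)) \<le> 2 powr (norm s) * real (n+2) powr (-Re s)"
        unfolding na by (rule em_expansion_row_bound(2)) simp
      ultimately show "norm (\<Sum>j. norm (a n j)) \<le> 2 powr (norm s) * real (n+2) powr (-Re s)" by simp
    qed
  qed
  have "(\<lambda>n. \<Sum>j. a n j) sums (\<Sum>j. \<Sum>n. a n j)"
    by (rule sums_suminf_swap[OF rows bnd])
  hence "(\<lambda>n. - em_term (n+2) s) sums (\<Sum>j. em_coeff j s * zeta_tail (s + of_nat j + 1))"
    unfolding rowsum colsum .
  from sums_minus[OF this] show ?thesis by simp
qed

lemma em_term_sums_telescope:
  assumes s: "1 < Re s"
  shows "(\<lambda>n. em_term (n+2) s) sums (zeta_tail s - 2 powr (1-s) / (s-1))"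
proof -
  have s1: "1 - s \<noteq> 0" using s by auto
  define f where "f n = of_nat (n+2) powr (1-s) / (1-s)" for n
  have lim0: "(\<lambda>n. of_nat n powr (1-s) :: complex) \<longlonglongrightarrow> 0"
    by (rule tendsto_neg_powr_complex_of_nat[OF filterlim_ident]) (use s in simp)
  have "(\<lambda>n. of_nat (n+2) powr (1-s) :: complex) \<longlonglongrightarrow> 0"
    using LIMSEQ_ignore_initial_segment[OF lim0, of 2] by simp
  hence flim: "f \<longlonglongrightarrow> 0" unfolding f_def using tendsto_divide_zero by blast
  have tel: "(\<lambda>n. f (Suc n) - f n) sums (0 - f 0)" by (rule telescope_sums[OF flim])
  have "(\<lambda>n. of_nat (n+2) powr (-s) - (f (Suc n) - f n)) sums (zeta_tail s - (0 - f 0))"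
    by (rule sums_diff[OF zeta_tail_sums[OF s] tel])
  moreover have "of_nat (n+2) powr (-s) - (f (Suc n) - f n) = em_term (n+2) s" for n
    unfolding f_def em_term_def by (simp add: diff_divide_distrib add_ac)
  moreover have "zeta_tail s - (0 - f 0) = zeta_tail s - 2 powr (1-s) / (s-1)"
    unfolding f_def using s1 by (simp add: field_simps)
  ultimately show ?thesis by simp
qed

lemma norm_powr_diff_le:
  assumes x: "1 \<le> x" "x \<le> u" and s: "0 < Re s"
  shows "norm (of_real x powr (-s) - of_real u powr (-s) :: complex) \<le> norm s * x powr (-Re s - 1) * (u - x)"
proof -
  have "norm ((\<lambda>w. w powr (-s)) (of_real u) - (\<lambda>w. w powr (-s)) (of_real x)) \<le> (norm s * x powr (-Re s - 1)) * (u - x)"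
  proof (rule norm_diff_le_real_segment[where f' = "\<lambda>w. (-s) * w powr (-s - 1)"])
    fix v assume v: "x \<le> v" "v \<le> u"
    show "((\<lambda>w. w powr (-s)) has_field_derivative (-s) * of_real v powr (-s - 1)) (at (of_real v))"
      by (rule has_field_derivative_powr) (rule of_real_pos_notin_nonpos_Reals, use x v in auto)
    have "norm ((-s) * of_real v powr (-s - 1)) = norm s * v powr (-Re s - 1)"
      using x v by (simp add: norm_mult norm_of_real_powr)
    also have "\<dots> \<le> norm s * x powr (-Re s - 1)"
      by (intro mult_left_mono powr_mono2') (use x v s in auto)
    finally show "norm ((-s) * of_real v powr (-s - 1)) \<le> norm s * x powr (-Re s - 1)" .
  qed (use x in auto)
  thus ?thesis by (simp add: norm_minus_commute)
qed

lemma norm_em_term_le: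
  assumes n: "1 \<le> n" and s: "0 < Re s" "s \<noteq> 1"
  shows "norm (em_term n s) \<le> norm s * real n powr (-Re s - 1)"
proof -
  have s1: "1 - s \<noteq> 0" using s by auto
  define c where "c = (of_nat n :: complex) powr (-s)"
  \<comment> \<open>\<open>em_term n s = g (n + 1) - g n\<close>, and \<open>g' u = n^-s - u^-s\<close> is \<open>O(|s| n^(-Re s - 1))\<close> on \<open>[n, n + 1]\<close>.\<close>
  define g where "g z = c * (z - of_nat n) - (z powr (1-s) - of_nat n powr (1-s)) / (1-s)" for z
  have "norm (g (of_real (real n + 1)) - g (of_real (real n))) \<le> (norm s * real n powr (-Re s - 1)) * ((real n + 1) - real n)"
  proof (rule norm_diff_le_real_segment[where f' = "\<lambda>z. c - z powr (-s)"])
    fix u assume u: "real n \<le> u" "u \<le> real n + 1"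
    have u0: "0 < u" using u n by auto
    have d1: "((\<lambda>z. z powr (1-s)) has_field_derivative ((1-s) * of_real u powr (1 - s - 1))) (at (of_real u))"
      by (rule has_field_derivative_powr) (rule of_real_pos_notin_nonpos_Reals[OF u0])
    have d2: "((\<lambda>z. z - of_nat n) has_field_derivative 1) (at (of_real u))"
      by (auto intro!: derivative_eq_intros)
    have "(g has_field_derivative (c * 1 - ((1-s) * of_real u powr (1 - s - 1) - 0) / (1-s))) (at (of_real u))"
      unfolding g_def[abs_def]
      by (rule DERIV_diff[OF DERIV_cmult[OF d2] DERIV_cdivide[OF DERIV_diff[OF d1 DERIV_const]]])
    moreover have "c * 1 - ((1-s) * of_real u powr (1 - s - 1) - 0) / (1-s) = c - of_real u powr (-s)"
      using s1 by simp
    ultimately show "(g has_field_derivative (c - of_real u powr (-s))) (at (of_real u))" by simp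
    have "norm (c - of_real u powr (-s)) \<le> norm s * real n powr (-Re s - 1) * (u - real n)"
      unfolding c_def using norm_powr_diff_le[of "real n" u s] u n s by simp
    also have "\<dots> \<le> norm s * real n powr (-Re s - 1) * 1"
      by (intro mult_left_mono) (use u in auto)
    finally show "norm (c - of_real u powr (-s)) \<le> norm s * real n powr (-Re s - 1)" by simp
  qed simp
  moreover have "g (of_real (real n + 1)) - g (of_real (real n)) = em_term n s"
    unfolding g_def em_term_def c_def by simp
  ultimately show ?thesis by simp
qed

section \<open>Analytic continuation of zeta\<close>

text \<open>The factor \<open>s + k\<close> split off here turns \<open>zeta_tail (s + k + 1)\<close> into \<open>tail_numer 0 (s + k + 1)\<close>.\<close>

definition em_coeff_red :: "nat \<Rightarrow> complex \<Rightarrow> complex" where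
  "em_coeff_red k s = (-1)^(Suc k) * pochhammer s k / (fact (Suc k) * of_nat (k+2))"

lemma em_coeff_eq_red: "em_coeff k s = em_coeff_red k s * (s + of_nat k)"
proof -
  have "em_coeff k s = ((-1)^Suc k * (pochhammer s k * (s + of_nat k))) / (fact (Suc k) * of_nat (k+2))"
    unfolding em_coeff_def gbinomial_pochhammer minus_minus pochhammer_Suc divide_divide_eq_left ..
  also have "\<dots> = em_coeff_red k s * (s + of_nat k)"
    unfolding em_coeff_red_def by (simp only: times_divide_eq_left mult.assoc)
  finally show ?thesis .
qed

lemma em_coeff_red_holomorphic: "em_coeff_red k holomorphic_on S"
  unfolding em_coeff_red_def by (intro holomorphic_intros) auto

text \<open>\<open>tail_numer m\<close> continues \<open>(s - 1) * zeta_tail s\<close> to \<open>Re s > 1 - m\<close>.\<close>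

fun tail_numer :: "nat \<Rightarrow> complex \<Rightarrow> complex" where
  "tail_numer 0 s = (s - 1) * zeta_tail s"
| "tail_numer (Suc m) s = 2 powr (1 - s) - (s - 1) * (\<Sum>k. em_coeff_red k s * tail_numer m (s + of_nat k + 1))"

lemma tail_numer_1_eq_0:
  assumes s: "1 < Re s"
  shows "tail_numer (Suc 0) s = tail_numer 0 s"
proof -
  have s1: "s - 1 \<noteq> 0" using s by auto
  have "(\<Sum>n. em_term (n+2) s) = - (\<Sum>j. em_coeff j s * zeta_tail (s + of_nat j + 1))" using em_term_sums_coeff_series[OF s] by (simp add: sums_iff)
  moreover have "(\<Sum>n. em_term (n+2) s) = zeta_tail s - 2 powr (1-s) / (s-1)" using em_term_sums_telescope[OF s] by (simp add: sums_iff)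
  ultimately have "- (\<Sum>j. em_coeff j s * zeta_tail (s + of_nat j + 1)) = zeta_tail s - 2 powr (1-s) / (s-1)" by simp
  hence A: "(\<Sum>j. em_coeff j s * zeta_tail (s + of_nat j + 1)) = 2 powr (1-s) / (s-1) - zeta_tail s"
    by (subst (asm) minus_equation_iff) simp
  have B: "em_coeff_red k s * tail_numer 0 (s + of_nat k + 1) = em_coeff k s * zeta_tail (s + of_nat k + 1)" for k
    by (simp add: em_coeff_eq_red)
  have C: "(\<Sum>k. em_coeff_red k s * tail_numer 0 (s + of_nat k + 1)) = (\<Sum>j. em_coeff j s * zeta_tail (s + of_nat j + 1))"
    by (rule arg_cong[where f=suminf], rule ext, rule B)
  have "tail_numer (Suc 0) s = 2 powr (1-s) - (s-1) * (\<Sum>k. em_coeff_red k s * tail_numer 0 (s + of_nat k + 1))"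
    by (rule tail_numer.simps(2))
  also have "\<dots> = (s - 1) * zeta_tail s" unfolding C A using s1 by (simp add: field_simps)
  finally show ?thesis by simp
qed

lemma tail_numer_Suc_eq: "1 - real m < Re s \<Longrightarrow> tail_numer (Suc m) s = tail_numer m s"
proof (induction m arbitrary: s)
  case 0
  thus ?case using tail_numer_1_eq_0 by simp
next
  case (Suc m)
  have "tail_numer (Suc m) (s + of_nat k + 1) = tail_numer m (s + of_nat k + 1)" for k
    by (rule Suc.IH) (use Suc.prems in simp)
  thus ?case by (simp only: tail_numer.simps(2)[of "Suc m"]) simp
qed

lemma tail_numer_eq_if_le:
  assumes "m \<le> m'" "1 - real m < Re s"
  shows "tail_numer m' s = tail_numer m s"
  using assms(1)
proof (induction m' rule: dec_induct)
  case (step n)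
  have "1 - real n < Re s" using step(1) assms(2) by linarith
  thus ?case using tail_numer_Suc_eq[of n s] step(3) by simp
qed simp

lemma tail_numer_eq_tail: "1 < Re s \<Longrightarrow> tail_numer m s = (s - 1) * zeta_tail s"
  using tail_numer_eq_if_le[of 0 m s] by simp

lemma norm_em_coeff_red_tail_numer_le:
  assumes s: "- real m < Re s" "norm s \<le> R" and k: "Suc m \<le> k"
  shows "norm (em_coeff_red k s * tail_numer m (s + of_nat k + 1))
           \<le> 4 * tail_sum 2 * 2^m * (pochhammer R (Suc k) / fact (Suc k) * (1/2)^(Suc k))"
proof -
  define P where "P = pochhammer R (Suc k) / fact (Suc k)"
  have Re2: "2 \<le> Re (s + of_nat k + 1)" using s k by simp
  have P0: "0 \<le> P"
    unfolding P_def using order_trans[OF norm_ge_zero s(2)] by (simp add: pochhammer_nonneg_if_nonneg)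
  have "em_coeff_red k s * tail_numer m (s + of_nat k + 1) = em_coeff k s * zeta_tail (s + of_nat k + 1)"
    using tail_numer_eq_tail[of "s + of_nat k + 1" m] Re2 by (simp add: em_coeff_eq_red)
  hence "norm (em_coeff_red k s * tail_numer m (s + of_nat k + 1))
         = norm (em_coeff k s) * norm (zeta_tail (s + of_nat k + 1))"
    by (simp add: norm_mult)
  also have "\<dots> \<le> P * (4 * tail_sum 2 * 2 powr (-(Re s + real k + 1)))"
  proof (rule mult_mono)
    show "norm (em_coeff k s) \<le> P"
      using norm_em_coeff_le[of k s] pochhammer_mono[OF norm_ge_zero s(2), of "Suc k"]
      unfolding P_def by (meson divide_right_mono fact_ge_zero order_trans)
    show "norm (zeta_tail (s + of_nat k + 1)) \<le> 4 * tail_sum 2 * 2 powr (-(Re s + real k + 1))"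
      using norm_zeta_tail_le[OF Re2] by simp
  qed (use P0 in simp_all)
  also have "\<dots> \<le> P * (4 * tail_sum 2 * (2^m * (1/2)^(Suc k)))"
  proof (rule mult_left_mono[OF _ P0])
    have "2 powr (-(Re s + real k + 1)) \<le> 2 powr (-(- real m + real k + 1))"
      by (rule powr_mono) (use s in auto)
    also have "(2::real) powr (-(- real m + real k + 1)) = 2^m * (1/2)^(Suc k)"
      by (subst powr_minus_Suc_split) (simp_all add: powr_realpow)
    finally show "4 * tail_sum 2 * 2 powr (-(Re s + real k + 1)) \<le> 4 * tail_sum 2 * (2^m * (1/2)^(Suc k))"
      by (rule mult_left_mono) (use tail_sum_nonneg[of 2] in simp)
  qed
  finally show ?thesis unfolding P_def by (simp only: ac_simps)
qed

lemma tail_numer_holomorphic: "tail_numer m holomorphic_on {s. 1 - real m < Re s}"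
proof (induction m)
  case 0
  have "(\<lambda>s. (s - 1) * zeta_tail s) holomorphic_on {s. 1 < Re s}"
    by (intro holomorphic_intros zeta_tail_holomorphic)
  hence "tail_numer 0 holomorphic_on {s. 1 < Re s}" by (rule holomorphic_transform) simp
  thus ?case by (simp del: tail_numer.simps)
next
  case (Suc m)
  define H where "H = {s. - real m < Re s}"
  have Hopen: "open H" unfolding H_def by (rule open_halfspace_Re_gt)
  have "(\<lambda>s. \<Sum>k. em_coeff_red k s * tail_numer m (s + of_nat k + 1)) holomorphic_on H"
  proof (rule holomorphic_on_locally[OF Hopen])
    fix x assume x: "x \<in> H"
    define R where "R = norm x + 1"
    define T where "T = H \<inter> ball 0 R"
    have Topen: "open T" unfolding T_def by (intro open_Int Hopen open_ball)
    have xT: "x \<in> T" unfolding T_def R_def using x by auto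
    have "(\<lambda>s. \<Sum>k. em_coeff_red k s * tail_numer m (s + of_nat k + 1)) holomorphic_on T"
    proof (rule holomorphic_on_suminf[OF Topen])
      fix k
      have "(tail_numer m \<circ> (\<lambda>s. s + of_nat k + 1)) holomorphic_on T"
        by (rule holomorphic_on_compose_gen[OF _ Suc.IH]) (auto intro!: holomorphic_intros simp: T_def H_def)
      thus "(\<lambda>s. em_coeff_red k s * tail_numer m (s + of_nat k + 1)) holomorphic_on T"
        by (intro holomorphic_intros em_coeff_red_holomorphic) (simp add: o_def)
    next
      have "(\<lambda>i. pochhammer R i / fact i * (1/2)^i) sums (1 - 1/2) powr (-R)"
        by (rule negative_binomial_series) auto
      hence "summable (\<lambda>k. pochhammer R (Suc k) / fact (Suc k) * (1/2)^(Suc k))"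
        by (subst summable_Suc_iff) (rule sums_summable)
      thus "summable (\<lambda>k. 4 * tail_sum 2 * 2^m * (pochhammer R (Suc k) / fact (Suc k) * (1/2)^(Suc k)))"
        by (rule summable_mult)
    next
      show "\<forall>\<^sub>F k in sequentially. \<forall>s\<in>T. norm (em_coeff_red k s * tail_numer m (s + of_nat k + 1))
              \<le> 4 * tail_sum 2 * 2^m * (pochhammer R (Suc k) / fact (Suc k) * (1/2)^(Suc k))"
        by (rule eventually_sequentiallyI[of "Suc m"], intro ballI norm_em_coeff_red_tail_numer_le)
           (auto simp: T_def H_def)
    qed
    thus "\<exists>T. open T \<and> x \<in> T \<and> T \<subseteq> H \<and>
            (\<lambda>s. \<Sum>k. em_coeff_red k s * tail_numer m (s + of_nat k + 1)) holomorphic_on T"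
      using Topen xT by (auto simp: T_def)
  qed
  hence "(\<lambda>s. 2 powr (1 - s) - (s - 1) * (\<Sum>k. em_coeff_red k s * tail_numer m (s + of_nat k + 1)))
           holomorphic_on H"
    by (intro holomorphic_intros)
  hence "tail_numer (Suc m) holomorphic_on H" by (rule holomorphic_transform) simp
  moreover have "{s. 1 - real (Suc m) < Re s} = H" by (auto simp: H_def)
  ultimately show ?case by (simp only:)
qed

definition cont_level :: "complex \<Rightarrow> nat" where "cont_level s = nat \<lceil>1 - Re s\<rceil> + 1"

lemma cont_level_bound: "1 - real (cont_level s) < Re s"
proof -
  have A: "1 - Re s \<le> of_int \<lceil>1 - Re s\<rceil>" by (rule le_of_int_ceiling)
  have c: "\<lceil>1 - Re s\<rceil> \<le> int (nat \<lceil>1 - Re s\<rceil>)" by simp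
  have B: "of_int \<lceil>1 - Re s\<rceil> \<le> real (nat \<lceil>1 - Re s\<rceil>)"
    using c of_int_le_iff[where 'a=real] of_int_of_nat_eq by metis
  have "real (cont_level s) = real (nat \<lceil>1 - Re s\<rceil>) + 1" unfolding cont_level_def by simp
  with A B show ?thesis by linarith
qed

definition tail_numer_glued :: "complex \<Rightarrow> complex" where "tail_numer_glued s = tail_numer (cont_level s) s"

lemma tail_numer_glued_eq:
  assumes m: "1 - real m < Re s"
  shows "tail_numer_glued s = tail_numer m s"
proof (cases "m \<le> cont_level s")
  case True
  show ?thesis unfolding tail_numer_glued_def by (rule tail_numer_eq_if_le[OF True m])
next
  case False
  hence le: "cont_level s \<le> m" by simp
  show ?thesis unfolding tail_numer_glued_def by (rule tail_numer_eq_if_le[OF le cont_level_bound, symmetric])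
qed

lemma tail_numer_glued_holomorphic: "tail_numer_glued holomorphic_on UNIV"
proof (rule holomorphic_on_locally)
  fix x :: complex
  let ?T = "{s. 1 - real (cont_level x) < Re s}"
  have "tail_numer (cont_level x) holomorphic_on ?T" by (rule tail_numer_holomorphic)
  hence "tail_numer_glued holomorphic_on ?T" by (rule holomorphic_transform) (simp add: tail_numer_glued_eq)
  moreover have "open ?T" by (rule open_halfspace_Re_gt)
  moreover have "x \<in> ?T" using cont_level_bound by simp
  ultimately show "\<exists>T. open T \<and> x \<in> T \<and> T \<subseteq> UNIV \<and> tail_numer_glued holomorphic_on T" by blast
qed simp

definition zeta_cont :: "complex \<Rightarrow> complex" where "zeta_cont s = 1 + tail_numer_glued s / (s - 1)"

lemma zeta_cont_holomorphic: "zeta_cont holomorphic_on (- {1})"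
proof -
  have "tail_numer_glued holomorphic_on (- {1})" by (rule holomorphic_on_subset[OF tail_numer_glued_holomorphic]) simp
  hence "(\<lambda>s. 1 + tail_numer_glued s / (s - 1)) holomorphic_on (- {1})"
    by (intro holomorphic_intros) auto
  thus ?thesis unfolding zeta_cont_def[abs_def] .
qed

lemma zeta_cont_eq_tail: "1 < Re w \<Longrightarrow> zeta_cont w = 1 + zeta_tail w"
proof -
  assume w: "1 < Re w"
  hence "tail_numer_glued w = (w - 1) * zeta_tail w" using tail_numer_glued_eq[of 0 w] tail_numer_eq_tail[of w 0] by simp
  moreover have "w - 1 \<noteq> 0" using w by auto
  ultimately show ?thesis unfolding zeta_cont_def by simp
qed

lemma zeta_cont_dirichlet: "1 < Re w \<Longrightarrow> zeta_cont w = (\<Sum>n. 1 / (of_nat (Suc n)) powr w)"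
proof -
  assume w: "1 < Re w"
  have "(\<lambda>n. 1 / (of_nat (Suc (Suc n))) powr w) sums zeta_tail w"
  proof -
    have "1 / (of_nat (Suc (Suc n)) :: complex) powr w = of_nat (n+2) powr (-w)" for n
      by (simp add: powr_minus inverse_eq_divide)
    thus ?thesis using zeta_tail_sums[OF w] by simp
  qed
  hence "(\<lambda>n. 1 / (of_nat (Suc n)) powr w) sums (zeta_tail w + 1 / (of_nat (Suc 0)) powr w)"
    by (subst (asm) sums_Suc_iff)
  hence "(\<Sum>n. 1 / (of_nat (Suc n)) powr w) = 1 + zeta_tail w" by (simp add: sums_iff)
  thus ?thesis using zeta_cont_eq_tail[OF w] by simp
qed

lemma riemann_zeta_eq_zeta_cont:
  assumes s: "s \<noteq> 1"
  shows "riemann_zeta s = zeta_cont s"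
  unfolding riemann_zeta_def
proof (rule the_equality)
  show "\<exists>f. f holomorphic_on - {1} \<and> (\<forall>w. 1 < Re w \<longrightarrow> f w = (\<Sum>n. 1 / of_nat (Suc n) powr w)) \<and> f s = zeta_cont s"
    using zeta_cont_holomorphic zeta_cont_dirichlet by blast
next
  fix z assume "\<exists>f. f holomorphic_on - {1} \<and> (\<forall>w. 1 < Re w \<longrightarrow> f w = (\<Sum>n. 1 / of_nat (Suc n) powr w)) \<and> f s = z"
  then obtain f where f: "f holomorphic_on - {1}" "\<And>w. 1 < Re w \<Longrightarrow> f w = (\<Sum>n. 1 / of_nat (Suc n) powr w)" "f s = z"
    by blast
  have conn: "connected (- {1::complex})"
    by (rule path_connected_imp_connected, rule path_connected_punctured_universe) simp
  have "f s = zeta_cont s"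
  proof (rule analytic_continuation_open[of "{w. 1 < Re w}" "- {1}" f zeta_cont])
    show "open {w. 1 < Re w}" by (rule open_halfspace_Re_gt)
    show "open (- {1::complex})" by auto
    show "{w. 1 < Re w} \<noteq> {}" by (auto intro: exI[of _ 2])
    show "{w. 1 < Re w} \<subseteq> - {1}" by auto
    show "f z = zeta_cont z" if "z \<in> {w. 1 < Re w}" for z using that f(2) zeta_cont_dirichlet by simp
  qed (use conn f(1) zeta_cont_holomorphic s in auto)
  thus "z = zeta_cont s" using f(3) by simp
qed

section \<open>Bounds for zeta in the right half plane\<close>

definition punctured_right_half :: "complex set" where "punctured_right_half = {s. 0 < Re s} - {1}"

lemma open_punctured_right_half: "open punctured_right_half"
  unfolding punctured_right_half_def by (intro open_Diff open_halfspace_Re_gt) auto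

lemma connected_punctured_right_half: "connected punctured_right_half"
proof -
  have "aff_dim {s::complex. 0 < Re s} = int DIM(complex)"
    by (rule aff_dim_open) (auto intro: open_halfspace_Re_gt exI[of _ 1])
  hence "aff_dim {s::complex. 0 < Re s} \<noteq> 1" by simp
  thus ?thesis unfolding punctured_right_half_def by (intro connected_punctured_convex convex_halfspace_Re_gt)
qed

lemma em_term_holomorphic: "em_term n holomorphic_on punctured_right_half"
  unfolding em_term_def[abs_def] punctured_right_half_def by (intro holomorphic_intros) auto

definition zeta_em :: "complex \<Rightarrow> complex" where
  "zeta_em s = 1 + 2 powr (1 - s) / (s - 1) + (\<Sum>n. em_term (n+2) s)"

lemma zeta_em_holomorphic: "zeta_em holomorphic_on punctured_right_half"
proof -
  have "(\<lambda>s. \<Sum>n. em_term (n+2) s) holomorphic_on punctured_right_half"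
  proof (rule holomorphic_on_locally[OF open_punctured_right_half])
    fix x assume x: "x \<in> punctured_right_half"
    define R where "R = norm x + 1"
    define T where "T = ({s. Re x / 2 < Re s} \<inter> ball 0 R) - {1}"
    have x0: "0 < Re x" using x by (simp add: punctured_right_half_def)
    have Topen: "open T" unfolding T_def by (intro open_Diff open_Int open_halfspace_Re_gt open_ball) auto
    have xT: "x \<in> T" using x x0 by (auto simp: T_def R_def punctured_right_half_def)
    have TD: "T \<subseteq> punctured_right_half" using x0 by (auto simp: T_def punctured_right_half_def)
    have "(\<lambda>s. \<Sum>n. em_term (n+2) s) holomorphic_on T"
    proof (rule holomorphic_on_suminf[OF Topen])
      show "em_term (n+2) holomorphic_on T" for n by (rule holomorphic_on_subset[OF em_term_holomorphic TD])
      show "summable (\<lambda>n. R * real (n+2) powr (-(Re x / 2) - 1))"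
        by (intro summable_mult summable_powr_plus2) (use x0 in simp)
      show "\<forall>\<^sub>F n in sequentially. \<forall>s\<in>T. norm (em_term (n+2) s) \<le> R * real (n+2) powr (-(Re x / 2) - 1)"
      proof (intro always_eventually allI ballI)
        fix n s assume s: "s \<in> T"
        have sR: "norm s \<le> R" and sx: "Re x / 2 < Re s" and s1: "s \<noteq> 1" using s by (auto simp: T_def)
        have "norm (em_term (n+2) s) \<le> norm s * real (n+2) powr (-Re s - 1)"
          by (rule norm_em_term_le) (use sx x0 s1 in auto)
        also have "\<dots> \<le> R * real (n+2) powr (-(Re x / 2) - 1)"
          by (intro mult_mono powr_mono) (use sR sx order_trans[OF norm_ge_zero sR] in auto)
        finally show "norm (em_term (n+2) s) \<le> R * real (n+2) powr (-(Re x / 2) - 1)" .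
      qed
    qed
    thus "\<exists>T. open T \<and> x \<in> T \<and> T \<subseteq> punctured_right_half \<and> (\<lambda>s. \<Sum>n. em_term (n+2) s) holomorphic_on T"
      using Topen xT TD by blast
  qed
  hence "(\<lambda>s. 1 + 2 powr (1 - s) / (s - 1) + (\<Sum>n. em_term (n+2) s)) holomorphic_on punctured_right_half"
    by (intro holomorphic_intros) (auto simp: punctured_right_half_def)
  thus ?thesis unfolding zeta_em_def[abs_def] .
qed

lemma zeta_cont_eq_zeta_em:
  assumes s: "s \<in> punctured_right_half"
  shows "zeta_cont s = zeta_em s"
proof (rule analytic_continuation_open[of "{w. 1 < Re w}" punctured_right_half zeta_cont zeta_em])
  show "open {w. 1 < Re w}" by (rule open_halfspace_Re_gt)
  show "{w. 1 < Re w} \<noteq> {}" by (auto intro: exI[of _ 2])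
  show "{w. 1 < Re w} \<subseteq> punctured_right_half" by (auto simp: punctured_right_half_def)
  show "zeta_cont holomorphic_on punctured_right_half"
    by (rule holomorphic_on_subset[OF zeta_cont_holomorphic]) (auto simp: punctured_right_half_def)
  show "zeta_cont z = zeta_em z" if "z \<in> {w. 1 < Re w}" for z
  proof -
    have z: "1 < Re z" using that by simp
    have "(\<Sum>n. em_term (n+2) z) = zeta_tail z - 2 powr (1-z) / (z-1)"
      using em_term_sums_telescope[OF z] by (simp add: sums_iff)
    thus ?thesis unfolding zeta_em_def zeta_cont_eq_tail[OF z] by simp
  qed
qed (use open_punctured_right_half connected_punctured_right_half zeta_em_holomorphic s in auto)

lemma norm_zeta_cont_minus_1_le_linear:
  assumes s: "1/2 \<le> Re s" "1/4 \<le> norm (s - 1)"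
  shows "norm (zeta_cont s - 1) \<le> 6 + tail_sum (3/2) * norm s"
proof -
  have s1: "s \<noteq> 1" using s by auto
  have sD: "s \<in> punctured_right_half" using s s1 by (auto simp: punctured_right_half_def)
  have eq: "zeta_cont s - 1 = 2 powr (1 - s) / (s - 1) + (\<Sum>n. em_term (n+2) s)"
    using zeta_cont_eq_zeta_em[OF sD] unfolding zeta_em_def by simp
  have n2: "norm ((2::complex) powr (1 - s)) = 2 powr (1 - Re s)"
    using norm_powr_real_powr[of 2 "1 - s"] by simp
  have "norm (2 powr (1 - s) / (s - 1)) = 2 powr (1 - Re s) / norm (s - 1)"
    by (simp add: norm_divide n2)
  also have "\<dots> \<le> 2 powr (1/2) / (1/4)"
    by (intro frac_le powr_mono) (use s in auto)
  also have "\<dots> \<le> 6" using powr_2_half_le by simp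
  finally have A: "norm (2 powr (1 - s) / (s - 1)) \<le> 6" .
  have le: "norm (em_term (n+2) s) \<le> norm s * real (n+2) powr (- (3/2))" for n
  proof -
    have "norm (em_term (n+2) s) \<le> norm s * real (n+2) powr (-Re s - 1)"
      by (rule norm_em_term_le) (use s s1 in auto)
    also have "\<dots> \<le> norm s * real (n+2) powr (- (3/2))"
      by (intro mult_left_mono powr_mono) (use s in auto)
    finally show ?thesis .
  qed
  have sm: "summable (\<lambda>n. norm s * real (n+2) powr (- (3/2)))"
    by (intro summable_mult summable_powr_plus2) simp
  have smn: "summable (\<lambda>n. norm (em_term (n+2) s))"
    by (rule summable_comparison_test[OF _ sm]) (use le in auto)
  have "norm (\<Sum>n. em_term (n+2) s) \<le> (\<Sum>n. norm (em_term (n+2) s))" by (rule summable_norm[OF smn])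
  also have "\<dots> \<le> (\<Sum>n. norm s * real (n+2) powr (- (3/2)))" by (rule suminf_le[OF le smn sm])
  also have "\<dots> = norm s * tail_sum (3/2)" unfolding tail_sum_def by (rule suminf_mult) (rule summable_powr_plus2, simp)
  finally have B: "norm (\<Sum>n. em_term (n+2) s) \<le> tail_sum (3/2) * norm s" by (simp add: mult_ac)
  show ?thesis unfolding eq using A B norm_triangle_ineq[of "2 powr (1 - s) / (s - 1)" "\<Sum>n. em_term (n+2) s"]
    by linarith
qed

lemma norm_zeta_cont_minus_1_le_exp:
  assumes s: "2 \<le> Re s"
  shows "norm (zeta_cont s - 1) \<le> 4 * tail_sum 2 * 2 powr (-Re s)"
  using zeta_cont_eq_tail[of s] norm_zeta_tail_le[OF s] s by simp

definition ray_const :: real where "ray_const = 3 * (6 + 2 * tail_sum (3/2)) + 4 * tail_sum 2"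

lemma ray_const_nonneg: "0 \<le> ray_const"
  unfolding ray_const_def using tail_sum_nonneg[of 2] tail_sum_nonneg[of "3/2"] by simp

lemma norm_diagonal_minus_1_ge: "1/4 \<le> norm (1/2 + of_real r + \<i> * of_real r - 1 :: complex)"
proof -
  define s where "s = 1/2 + of_real r + \<i> * of_real r - (1 :: complex)"
  have "(1/4::real)^2 \<le> 2 * (r - 1/4)^2 + 1/8" by (simp add: power2_eq_square)
  also have "\<dots> = (Re s)^2 + (Im s)^2" by (simp add: s_def power2_eq_square algebra_simps)
  also have "\<dots> = (norm s)^2" by (simp add: cmod_power2)
  finally show ?thesis unfolding s_def by (metis power2_le_imp_le norm_ge_zero)
qed

lemma norm_zeta_cont_diagonal_le:
  assumes r: "0 \<le> r"
  shows "norm (zeta_cont (1/2 + of_real r + \<i> * of_real r) - 1) \<le> (6 + 2 * tail_sum (3/2)) * (1 + r)"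
proof -
  define s where "s = 1/2 + of_real r + \<i> * of_real r"
  have "norm (1/2 + of_real r :: complex) = 1/2 + r"
    using norm_of_real[of "1/2 + r", where 'a=complex] r by simp
  hence ns: "norm s \<le> 1/2 + 2 * r"
    using norm_triangle_ineq[of "1/2 + of_real r" "\<i> * of_real r"] r by (simp add: s_def norm_mult)
  have "norm (zeta_cont s - 1) \<le> 6 + tail_sum (3/2) * norm s"
    by (rule norm_zeta_cont_minus_1_le_linear) (use r norm_diagonal_minus_1_ge in \<open>auto simp: s_def\<close>)
  also have "\<dots> \<le> 6 + tail_sum (3/2) * (1/2 + 2 * r)"
    by (intro add_left_mono mult_left_mono ns tail_sum_nonneg) simp
  also have "\<dots> \<le> (6 + 2 * tail_sum (3/2)) * (1 + r)"
    using tail_sum_nonneg[of "3/2"] r by (simp add: algebra_simps)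
  finally show ?thesis unfolding s_def .
qed

lemma norm_zeta_cont_ray_le:
  assumes r: "0 \<le> r"
  shows "norm (zeta_cont (1/2 + of_real r + \<i> * of_real r) - 1) \<le> ray_const * (1 + r) * 2 powr (-r)"
proof -
  define s where "s = 1/2 + of_real r + \<i> * of_real r"
  have Res: "Re s = 1/2 + r" by (simp add: s_def)
  have p: "0 < (2::real) powr (-r)" by simp
  show ?thesis
  proof (cases "r \<le> 3/2")
    case True
    have "norm (zeta_cont s - 1) \<le> (6 + 2 * tail_sum (3/2)) * (1 + r)"
      unfolding s_def by (rule norm_zeta_cont_diagonal_le[OF r])
    also have "\<dots> \<le> (6 + 2 * tail_sum (3/2)) * (1 + r) * (3 * 2 powr (-r))"
    proof -
      have "2 powr r \<le> 2 powr (3/2)" by (rule powr_mono) (use True in auto)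
      also have "(2::real) powr (3/2) = 2 * 2 powr (1/2)"
        using powr_add[of "2::real" 1 "1/2"] by simp
      also have "\<dots> \<le> 3" using powr_2_half_le by simp
      finally have "1 \<le> 3 * 2 powr (-r)" by (simp add: powr_minus field_simps)
      from mult_left_mono[OF this, of "(6 + 2 * tail_sum (3/2)) * (1 + r)"] show ?thesis using tail_sum_nonneg[of "3/2"] r by simp
    qed
    also have "\<dots> \<le> ray_const * (1 + r) * 2 powr (-r)"
    proof -
      have "(6 + 2 * tail_sum (3/2)) * 3 \<le> ray_const" unfolding ray_const_def using tail_sum_nonneg[of 2] by simp
      hence "(6 + 2 * tail_sum (3/2)) * 3 * ((1 + r) * 2 powr (-r)) \<le> ray_const * ((1 + r) * 2 powr (-r))"
        by (rule mult_right_mono) (use r p in simp)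
      thus ?thesis by (simp add: algebra_simps)
    qed
    finally show ?thesis unfolding s_def .
  next
    case False
    have "norm (zeta_cont s - 1) \<le> 4 * tail_sum 2 * 2 powr (-Re s)" by (rule norm_zeta_cont_minus_1_le_exp) (use False Res in auto)
    also have "2 powr (-Re s) \<le> 2 powr (-r)" unfolding Res by (rule powr_mono) auto
    hence "4 * tail_sum 2 * 2 powr (-Re s) \<le> 4 * tail_sum 2 * 2 powr (-r)" using tail_sum_nonneg[of 2] by (intro mult_left_mono) auto
    also have "\<dots> \<le> ray_const * (1 + r) * 2 powr (-r)"
    proof -
      have "4 * tail_sum 2 \<le> ray_const" unfolding ray_const_def using tail_sum_nonneg[of "3/2"] by simp
      also have "ray_const * 1 \<le> ray_const * (1 + r)" by (rule mult_left_mono) (use r ray_const_nonneg in auto)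
      finally have "4 * tail_sum 2 \<le> ray_const * (1 + r)" by simp
      thus ?thesis using p by (intro mult_right_mono) auto
    qed
    finally show ?thesis unfolding s_def by simp
  qed
qed

section \<open>Rotating the ray of integration\<close>

text \<open>\<open>rot_scale\<close> is chosen so that \<open>2 powr (-x / rot_scale) * exp (-x / rot_scale) = exp (-x)\<close>.\<close>

definition rot_scale :: real where "rot_scale = 1 + ln 2"

definition rot_dir :: complex where "rot_dir = (1 - \<i>) / of_real rot_scale"

definition zeta_gamma_integrand :: "real \<Rightarrow> complex \<Rightarrow> complex" where
  "zeta_gamma_integrand t z = (zeta_cont (1/2 + \<i> * z) - 1) * (z powr of_real (t - 1) * exp (- z))"

definition sector :: "complex set" where "sector = {z. 0 \<le> Re z \<and> Im z \<le> 0 \<and> 0 \<le> Re z + Im z}"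

lemma rot_scale_ge: "1 \<le> rot_scale" and rot_scale_le: "rot_scale \<le> 2" and rot_scale_pos: "0 < rot_scale"
  using ln_2_less_1 ln2_ge_two_thirds unfolding rot_scale_def by auto

lemma Re_rot_dir: "Re rot_dir = 1 / rot_scale" and Im_rot_dir: "Im rot_dir = - 1 / rot_scale"
  unfolding rot_dir_def using rot_scale_pos by (simp_all add: Re_divide Im_divide power2_eq_square)

lemma norm_rot_dir_le: "norm rot_dir \<le> 9/10"
proof -
  have "norm rot_dir = norm (1 - \<i>) / rot_scale" unfolding rot_dir_def using rot_scale_pos by (simp add: norm_divide)
  also have "norm (1 - \<i>) = sqrt 2" by (simp add: cmod_def)
  also have "sqrt 2 / rot_scale \<le> 9/10" using powr_2_half_le rot_scale_ge ln2_ge_two_thirds rot_scale_pos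
    by (simp add: powr_half_sqrt rot_scale_def divide_le_eq)
  finally show ?thesis .
qed

lemma norm_rot_dir_pos: "0 < norm rot_dir"
  unfolding rot_dir_def using rot_scale_pos by (simp add: complex_eq_iff)

lemma convex_sector: "convex sector"
proof -
  have "sector = {z. Re z \<ge> 0} \<inter> {z. Im z \<le> 0} \<inter> {z. inner (1 + \<i>) z \<ge> 0}"
    unfolding sector_def by (auto simp: inner_add_left)
  moreover have "convex ({z. Re z \<ge> 0} \<inter> {z. Im z \<le> 0} \<inter> {z. inner (1 + \<i>) z \<ge> (0::real)})"
    by (intro convex_Int convex_halfspace_Re_ge convex_halfspace_Im_le convex_halfspace_ge)
  ultimately show ?thesis by simp
qed

lemma sector_shift_neq_1: "z \<in> sector \<Longrightarrow> 1/2 + \<i> * z \<noteq> 1"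
proof
  assume z: "z \<in> sector" and e: "1/2 + \<i> * z = 1"
  have "Re (1/2 + \<i> * z) = Re 1" "Im (1/2 + \<i> * z) = Im 1" using e by simp_all
  hence "Im z = - 1/2" "Re z = 0" by simp_all
  thus False using z by (simp add: sector_def)
qed

lemma sector_Re_pos: "z \<in> sector \<Longrightarrow> z \<noteq> 0 \<Longrightarrow> 0 < Re z"
proof (rule ccontr)
  assume z: "z \<in> sector" "z \<noteq> 0" "\<not> 0 < Re z"
  hence "Re z = 0" "Im z = 0" by (auto simp: sector_def)
  hence "z = 0" by (simp add: complex_eq_iff)
  thus False using z by simp
qed

lemma shift_neq_1: "0 < Re z \<Longrightarrow> 1/2 + \<i> * z \<noteq> 1"
proof
  assume z: "0 < Re z" and e: "1/2 + \<i> * z = 1"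
  have "Im (1/2 + \<i> * z) = Im 1" using e by simp
  thus False using z by simp
qed

lemma zeta_gamma_integrand_continuous_on:
  assumes t: "1 < t"
  shows "continuous_on sector (zeta_gamma_integrand t)"
proof -
  have c1: "continuous_on sector (\<lambda>z. zeta_cont (1/2 + \<i> * z))"
    by (rule continuous_on_compose2[OF holomorphic_on_imp_continuous_on[OF zeta_cont_holomorphic]])
       (auto intro!: continuous_intros dest: sector_shift_neq_1)
  have c2: "continuous_on sector (\<lambda>z. z powr of_real (t - 1))"
    by (rule continuous_on_powr_complex) (use t in \<open>auto simp: sector_def intro!: continuous_intros\<close>)
  show ?thesis unfolding zeta_gamma_integrand_def[abs_def]
    by (intro continuous_intros c1 c2)
qed

lemma zeta_gamma_integrand_holomorphic: "zeta_gamma_integrand t holomorphic_on {z. 0 < Re z}"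
proof -
  have h1: "(\<lambda>z. zeta_cont (1/2 + \<i> * z)) holomorphic_on {z. 0 < Re z}"
  proof -
    have "(zeta_cont \<circ> (\<lambda>z. 1/2 + \<i> * z)) holomorphic_on {z. 0 < Re z}"
      by (rule holomorphic_on_compose_gen[OF _ zeta_cont_holomorphic]) (auto intro!: holomorphic_intros dest: shift_neq_1)
    thus ?thesis by (simp add: o_def)
  qed
  have h2: "(\<lambda>z. z powr of_real (t - 1)) holomorphic_on {z. 0 < Re z}"
    by (rule holomorphic_on_powr) (auto intro!: holomorphic_intros simp: complex_nonpos_Reals_iff)
  show ?thesis unfolding zeta_gamma_integrand_def[abs_def] by (intro holomorphic_intros h1 h2)
qed

lemma norm_zeta_gamma_integrand_segment_le:
  assumes t: "1 < t" and R: "1 \<le> R" and z: "z \<in> closed_segment (of_real R) (of_real R * rot_dir)"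
  shows "norm (zeta_gamma_integrand t z) \<le> (6 + tail_sum (3/2) * (1/2 + R)) * R powr (t - 1) * exp (- R / rot_scale)"
proof -
  have Rez: "R / rot_scale \<le> Re z"
    using closed_segment_subset[OF _ _ convex_halfspace_Re_ge, of "of_real R" "R / rot_scale" "of_real R * rot_dir"] z
      R rot_scale_ge rot_scale_pos by (auto simp: Re_rot_dir divide_le_eq)
  have Imz: "Im z \<le> 0"
    using closed_segment_subset[OF _ _ convex_halfspace_Im_le, of "of_real R" 0 "of_real R * rot_dir"] z
      R rot_scale_pos by (auto simp: Im_rot_dir)
  have nz: "norm z \<le> R"
    using closed_segment_subset[OF _ _ convex_cball, of "of_real R" 0 R "of_real R * rot_dir"] z
      R norm_rot_dir_le by (auto simp: norm_mult mult_left_le)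
  have z0: "0 < Re z" using Rez R rot_scale_pos by (smt (verit) divide_pos_pos)
  define s where "s = 1/2 + \<i> * z"
  have Res: "1/2 \<le> Re s" using Imz by (simp add: s_def)
  have "1/4 \<le> R / rot_scale" using R rot_scale_le rot_scale_pos by (simp add: divide_simps)
  also have "R / rot_scale \<le> \<bar>Im (s - 1)\<bar>" using Rez z0 by (simp add: s_def)
  also have "\<bar>Im (s - 1)\<bar> \<le> norm (s - 1)" by (rule abs_Im_le_cmod)
  finally have d: "1/4 \<le> norm (s - 1)" .
  have ns: "norm s \<le> 1/2 + R"
    using norm_triangle_ineq[of "1/2" "\<i> * z"] nz by (simp add: s_def norm_mult)
  have P1: "norm (zeta_cont s - 1) \<le> 6 + tail_sum (3/2) * (1/2 + R)"
    using norm_zeta_cont_minus_1_le_linear[OF Res d] mult_left_mono[OF ns tail_sum_nonneg[of "3/2"]] by simp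
  have P2: "norm (z powr of_real (t - 1)) \<le> R powr (t - 1)"
    using t nz by (simp add: norm_powr_real_powr' powr_mono2)
  have P3: "norm (exp (- z)) \<le> exp (- R / rot_scale)" using Rez by simp
  have "norm (zeta_gamma_integrand t z) = norm (zeta_cont s - 1) * (norm (z powr of_real (t - 1)) * norm (exp (- z)))"
    by (simp add: zeta_gamma_integrand_def s_def norm_mult)
  also have "\<dots> \<le> (6 + tail_sum (3/2) * (1/2 + R)) * (R powr (t - 1) * exp (- R / rot_scale))"
    by (intro mult_mono P1 P2 P3) (use tail_sum_nonneg[of "3/2"] R in auto)
  finally show ?thesis by (simp add: mult_ac)
qed

lemma zeta_gamma_integrand_contour_integrable:
  assumes t: "1 < t" and "p \<in> sector" "q \<in> sector"
  shows "zeta_gamma_integrand t contour_integrable_on linepath p q"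
  by (rule contour_integrable_continuous_linepath, rule continuous_on_subset[OF zeta_gamma_integrand_continuous_on[OF t]],
      rule closed_segment_subset) (use assms convex_sector in auto)

lemma zeta_gamma_integrand_triangle:
  assumes t: "1 < t" and abc: "a \<in> sector" "b \<in> sector" "c \<in> sector"
  shows "contour_integral (linepath a b) (zeta_gamma_integrand t) + contour_integral (linepath b c) (zeta_gamma_integrand t)
           + contour_integral (linepath c a) (zeta_gamma_integrand t) = 0"
proof -
  have hull: "convex hull {a, b, c} \<subseteq> sector"
    by (rule hull_minimal) (use abc convex_sector in auto)
  have "(zeta_gamma_integrand t has_contour_integral 0) (linepath a b +++ linepath b c +++ linepath c a)"
  proof (rule Cauchy_theorem_triangle_cofinite[of _ _ _ _ "{0}"])
    show "continuous_on (convex hull {a, b, c}) (zeta_gamma_integrand t)"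
      by (rule continuous_on_subset[OF zeta_gamma_integrand_continuous_on[OF t] hull])
    fix x assume x: "x \<in> interior (convex hull {a, b, c}) - {0}"
    hence "x \<in> sector" "x \<noteq> 0" using hull interior_subset by blast+
    hence "0 < Re x" by (rule sector_Re_pos)
    thus "zeta_gamma_integrand t field_differentiable at x"
      by (intro holomorphic_on_imp_differentiable_at[OF zeta_gamma_integrand_holomorphic open_halfspace_Re_gt]) auto
  qed auto
  moreover have "(zeta_gamma_integrand t has_contour_integral
      contour_integral (linepath a b) (zeta_gamma_integrand t) + (contour_integral (linepath b c) (zeta_gamma_integrand t)
        + contour_integral (linepath c a) (zeta_gamma_integrand t))) (linepath a b +++ (linepath b c +++ linepath c a))"
    using abc by (intro has_contour_integral_join has_contour_integral_integral valid_path_linepath valid_path_join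
                        zeta_gamma_integrand_contour_integrable[OF t]) auto
  ultimately show ?thesis using has_contour_integral_unique by (simp add: add.assoc)
qed

lemma has_contour_integral_closing_segment:
  assumes t: "1 < t" and R: "1 \<le> R"
  shows "(zeta_gamma_integrand t has_contour_integral
           integral {0..R} (\<lambda>x. zeta_gamma_integrand t (rot_dir * of_real x) * rot_dir)
             - integral {0..R} (\<lambda>x. zeta_gamma_integrand t (of_real x)))
         (linepath (of_real R) (of_real R * rot_dir))"
proof -
  define a where "a = (0::complex)"
  define b where "b = (of_real R :: complex)"
  define c where "c = of_real R * rot_dir"
  have abc: "a \<in> sector" "b \<in> sector" "c \<in> sector"
    using R rot_scale_pos by (simp_all add: a_def b_def c_def sector_def Re_rot_dir Im_rot_dir)
  define I1 where "I1 = contour_integral (linepath a b) (zeta_gamma_integrand t)"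
  define I2 where "I2 = contour_integral (linepath b c) (zeta_gamma_integrand t)"
  define I3 where "I3 = contour_integral (linepath c a) (zeta_gamma_integrand t)"
  have H: "(zeta_gamma_integrand t has_contour_integral contour_integral (linepath p q) (zeta_gamma_integrand t)) (linepath p q)"
    if "p \<in> sector" "q \<in> sector" for p q
    by (rule has_contour_integral_integral, rule zeta_gamma_integrand_contour_integrable[OF t that])
  have G1: "((\<lambda>x. zeta_gamma_integrand t (of_real x)) has_integral I1) {0..R}"
    using H[OF abc(1,2)] has_contour_integral_linepath_Reals_iff[of a b "zeta_gamma_integrand t" I1] R
    by (simp add: a_def b_def I1_def)
  have "(zeta_gamma_integrand t has_contour_integral (- I3)) (linepath a c)"
    using has_contour_integral_reversepath[OF valid_path_linepath H[OF abc(3,1)]] by (simp add: I3_def)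
  hence "((\<lambda>x. zeta_gamma_integrand t (linepath a c x) * (c - a)) has_integral (- I3)) {0..1}"
    by (simp add: has_contour_integral_linepath)
  moreover have "zeta_gamma_integrand t (linepath a c x) * (c - a)
      = (\<lambda>z. zeta_gamma_integrand t (rot_dir * z) * rot_dir) (linepath a b x) * (b - a)" for x
    by (simp add: a_def b_def c_def linepath_def scaleR_conv_of_real mult_ac)
  ultimately have "((\<lambda>z. zeta_gamma_integrand t (rot_dir * z) * rot_dir) has_contour_integral (- I3)) (linepath a b)"
    by (simp add: has_contour_integral_linepath)
  hence G2: "((\<lambda>x. zeta_gamma_integrand t (rot_dir * of_real x) * rot_dir) has_integral (- I3)) {0..R}"
    using has_contour_integral_linepath_Reals_iff[of a b "\<lambda>z. zeta_gamma_integrand t (rot_dir * z) * rot_dir" "- I3"] R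
    by (simp add: a_def b_def)
  have "I2 = - I3 - I1"
    using zeta_gamma_integrand_triangle[OF t abc] unfolding I1_def I2_def I3_def by (simp add: algebra_simps eq_neg_iff_add_eq_0)
  with H[OF abc(2,3)] show ?thesis
    unfolding integral_unique[OF G1] integral_unique[OF G2] by (simp add: b_def c_def I2_def)
qed

lemma norm_integral_diff_rotated_le:
  assumes t: "1 < t" and R: "1 \<le> R"
  shows "norm (integral {0..R} (\<lambda>x. zeta_gamma_integrand t (of_real x))
                 - integral {0..R} (\<lambda>x. zeta_gamma_integrand t (rot_dir * of_real x) * rot_dir))
           \<le> 2 * R * ((6 + tail_sum (3/2) * (1/2 + R)) * R powr (t - 1) * exp (- R / rot_scale))"
proof -
  define B where "B = (6 + tail_sum (3/2) * (1/2 + R)) * R powr (t - 1) * exp (- R / rot_scale)"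
  have B0: "0 \<le> B" unfolding B_def using tail_sum_nonneg[of "3/2"] R by simp
  have cb: "norm (of_real R * rot_dir - of_real R) \<le> 2 * R"
  proof -
    have "norm (of_real R * rot_dir - of_real R) \<le> R * norm rot_dir + R"
      using norm_triangle_ineq4[of "of_real R * rot_dir" "of_real R"] R by (simp add: norm_mult)
    moreover have "R * norm rot_dir \<le> R" using mult_left_mono[OF norm_rot_dir_le, of R] R by linarith
    ultimately show ?thesis by linarith
  qed
  have "norm (integral {0..R} (\<lambda>x. zeta_gamma_integrand t (rot_dir * of_real x) * rot_dir)
                 - integral {0..R} (\<lambda>x. zeta_gamma_integrand t (of_real x)))
        \<le> B * norm (of_real R * rot_dir - of_real R)"
    by (rule has_contour_integral_bound_linepath[OF has_contour_integral_closing_segment[OF t R] B0])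
       (use norm_zeta_gamma_integrand_segment_le[OF t R] in \<open>simp add: B_def\<close>)
  also have "\<dots> \<le> B * (2 * R)" by (rule mult_left_mono[OF cb B0])
  finally show ?thesis by (simp add: B_def norm_minus_commute mult_ac)
qed

definition gamma_majorant :: "real \<Rightarrow> real \<Rightarrow> real" where
  "gamma_majorant t x = (1 + x) * x powr (t - 1) / exp x"

lemma gamma_majorant_has_integral:
  assumes t: "1 < t"
  shows "(gamma_majorant t has_integral (Gamma t + Gamma (t + 1))) {0..}"
proof -
  have A: "((\<lambda>x. x powr (t - 1) / exp x) has_integral Gamma t) {0..}"
    by (rule Gamma_integral_real) (use t in simp)
  have B: "((\<lambda>x. x powr (t + 1 - 1) / exp x) has_integral Gamma (t + 1)) {0..}"
    by (rule Gamma_integral_real) (use t in simp)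
  have "((\<lambda>x. x powr (t - 1) / exp x + x powr (t + 1 - 1) / exp x) has_integral (Gamma t + Gamma (t + 1))) {0..}"
    by (rule has_integral_add[OF A B])
  moreover have "x powr (t - 1) / exp x + x powr (t + 1 - 1) / exp x = gamma_majorant t x" if x: "x \<in> {0..}" for x
  proof (cases "x = 0")
    case True thus ?thesis using t by (simp add: gamma_majorant_def)
  next
    case False
    hence x0: "0 < x" using x by simp
    have "x powr (t + 1 - 1) = x * x powr (t - 1)"
      using powr_add[of x 1 "t - 1"] x0 by simp
    thus ?thesis by (simp add: gamma_majorant_def field_simps)
  qed
  ultimately show ?thesis by (rule has_integral_eq[rotated]) auto
qed

lemma norm_zeta_gamma_integrand_real_le:
  assumes t: "1 < t" and x: "0 \<le> x"
  shows "norm (zeta_gamma_integrand t (of_real x)) \<le> (6 + tail_sum (3/2)) * gamma_majorant t x"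
proof -
  define s where "s = 1/2 + \<i> * (of_real x :: complex)"
  have Res: "1/2 \<le> Re s" by (simp add: s_def)
  have "1/4 \<le> \<bar>Re (s - 1)\<bar>" by (simp add: s_def)
  also have "\<dots> \<le> norm (s - 1)" by (rule abs_Re_le_cmod)
  finally have d: "1/4 \<le> norm (s - 1)" .
  have ns: "norm s \<le> 1/2 + x"
    using norm_triangle_ineq[of "1/2" "\<i> * of_real x"] x by (simp add: s_def norm_mult)
  have P1: "norm (zeta_cont s - 1) \<le> (6 + tail_sum (3/2)) * (1 + x)"
  proof -
    have "norm (zeta_cont s - 1) \<le> 6 + tail_sum (3/2) * norm s" by (rule norm_zeta_cont_minus_1_le_linear[OF Res d])
    also have "\<dots> \<le> 6 + tail_sum (3/2) * (1/2 + x)" by (intro add_left_mono mult_left_mono ns tail_sum_nonneg) simp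
    also have "\<dots> \<le> (6 + tail_sum (3/2)) * (1 + x)" using x tail_sum_nonneg[of "3/2"] by (simp add: algebra_simps mult_nonneg_nonneg)
    finally show ?thesis .
  qed
  have "norm (zeta_gamma_integrand t (of_real x)) = norm (zeta_cont s - 1) * (x powr (t - 1) * exp (- x))"
    using x by (simp add: zeta_gamma_integrand_def s_def norm_mult norm_of_real_powr)
  also have "\<dots> \<le> ((6 + tail_sum (3/2)) * (1 + x)) * (x powr (t - 1) * exp (- x))"
    by (intro mult_right_mono P1) simp
  also have "\<dots> = (6 + tail_sum (3/2)) * gamma_majorant t x" by (simp add: gamma_majorant_def exp_minus field_simps)
  finally show ?thesis .
qed

lemma norm_zeta_gamma_integrand_rotated_le:
  assumes t: "1 < t" and x: "0 \<le> x"
  shows "norm (zeta_gamma_integrand t (rot_dir * of_real x) * rot_dir) \<le> ray_const * norm rot_dir powr t * gamma_majorant t x"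
proof -
  define r where "r = x / rot_scale"
  have r: "0 \<le> r" "r \<le> x" using x rot_scale_ge rot_scale_pos by (auto simp: r_def divide_le_eq mult_le_cancel_left1)
  have s_eq: "1/2 + \<i> * (rot_dir * of_real x) = 1/2 + of_real r + \<i> * of_real r"
    unfolding r_def by (simp add: complex_eq_iff Re_rot_dir Im_rot_dir)
  have P1: "norm (zeta_cont (1/2 + \<i> * (rot_dir * of_real x)) - 1) \<le> ray_const * (1 + x) * 2 powr (- r)"
  proof -
    have "norm (zeta_cont (1/2 + \<i> * (rot_dir * of_real x)) - 1) \<le> ray_const * (1 + r) * 2 powr (- r)"
      unfolding s_eq by (rule norm_zeta_cont_ray_le[OF r(1)])
    also have "\<dots> \<le> ray_const * (1 + x) * 2 powr (- r)"
      by (intro mult_right_mono mult_left_mono) (use r ray_const_nonneg in auto)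
    finally show ?thesis .
  qed
  have P2: "norm ((rot_dir * of_real x) powr of_real (t - 1)) = norm rot_dir powr (t - 1) * x powr (t - 1)"
    using x by (simp add: norm_powr_real_powr' norm_mult powr_mult)
  have P3: "norm (exp (- (rot_dir * of_real x))) = exp (- r)"
    by (simp add: Re_rot_dir r_def)
  have E: "2 powr (- r) * exp (- r) = exp (- x)"
  proof -
    have "2 powr (- r) * exp (- r) = exp (- r * ln 2) * exp (- r)" by (simp add: powr_def)
    also have "\<dots> = exp (- (r * rot_scale))" by (simp add: rot_scale_def exp_add[symmetric] algebra_simps)
    also have "r * rot_scale = x" using rot_scale_pos by (simp add: r_def)
    finally show ?thesis .
  qed
  have "norm (zeta_gamma_integrand t (rot_dir * of_real x) * rot_dir)
        = norm (zeta_cont (1/2 + \<i> * (rot_dir * of_real x)) - 1) * (norm rot_dir powr (t - 1) * x powr (t - 1) * exp (- r)) * norm rot_dir"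
    unfolding zeta_gamma_integrand_def norm_mult P2 P3 by simp
  also have "\<dots> \<le> (ray_const * (1 + x) * 2 powr (- r)) * (norm rot_dir powr (t - 1) * x powr (t - 1) * exp (- r)) * norm rot_dir"
    by (intro mult_right_mono P1) (use norm_rot_dir_pos in auto)
  also have "\<dots> = ray_const * (norm rot_dir powr (t - 1) * norm rot_dir) * ((1 + x) * x powr (t - 1) * (2 powr (- r) * exp (- r)))"
    by (simp add: mult_ac)
  also have "norm rot_dir powr (t - 1) * norm rot_dir = norm rot_dir powr t"
    using powr_add[of "norm rot_dir" "t - 1" 1] norm_rot_dir_pos by simp
  also have "ray_const * norm rot_dir powr t * ((1 + x) * x powr (t - 1) * (2 powr (- r) * exp (- r))) = ray_const * norm rot_dir powr t * gamma_majorant t x"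
    unfolding E by (simp add: gamma_majorant_def exp_minus field_simps)
  finally show ?thesis .
qed

lemma zeta_gamma_integrand_real_continuous_on: "1 < t \<Longrightarrow> continuous_on {0..} (\<lambda>x. zeta_gamma_integrand t (of_real x))"
  by (rule continuous_on_compose2[OF zeta_gamma_integrand_continuous_on]) (auto intro!: continuous_intros simp: sector_def)

lemma zeta_gamma_integrand_rotated_continuous_on: "1 < t \<Longrightarrow> continuous_on {0..} (\<lambda>x. zeta_gamma_integrand t (rot_dir * of_real x) * rot_dir)"
proof -
  assume t: "1 < t"
  have "continuous_on {0..} (\<lambda>x. zeta_gamma_integrand t (rot_dir * of_real x))"
    by (rule continuous_on_compose2[OF zeta_gamma_integrand_continuous_on[OF t]])
       (use rot_scale_pos in \<open>auto intro!: continuous_intros simp: sector_def Re_rot_dir Im_rot_dir\<close>)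
  thus ?thesis by (intro continuous_intros)
qed

lemma zeta_gamma_integrand_real_absolutely_integrable:
  assumes t: "1 < t"
  shows "(\<lambda>x. zeta_gamma_integrand t (of_real x)) absolutely_integrable_on {0..}"
proof (rule measurable_bounded_by_integrable_imp_absolutely_integrable[where g = "\<lambda>x. (6 + tail_sum (3/2)) * gamma_majorant t x"])
  show "(\<lambda>x. zeta_gamma_integrand t (of_real x)) \<in> borel_measurable (lebesgue_on {0..})"
    by (rule continuous_imp_measurable_on_sets_lebesgue[OF zeta_gamma_integrand_real_continuous_on[OF t]]) simp
  show "(\<lambda>x. (6 + tail_sum (3/2)) * gamma_majorant t x) integrable_on {0..}" using has_integral_mult_right[OF gamma_majorant_has_integral[OF t]] by blast
  show "norm (zeta_gamma_integrand t (of_real x)) \<le> (6 + tail_sum (3/2)) * gamma_majorant t x" if "x \<in> {0..}" for x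
    using norm_zeta_gamma_integrand_real_le[OF t] that by simp
qed simp

lemma zeta_gamma_integrand_rotated_absolutely_integrable:
  assumes t: "1 < t"
  shows "(\<lambda>x. zeta_gamma_integrand t (rot_dir * of_real x) * rot_dir) absolutely_integrable_on {0..}"
proof (rule measurable_bounded_by_integrable_imp_absolutely_integrable[where g = "\<lambda>x. ray_const * norm rot_dir powr t * gamma_majorant t x"])
  show "(\<lambda>x. zeta_gamma_integrand t (rot_dir * of_real x) * rot_dir) \<in> borel_measurable (lebesgue_on {0..})"
    by (rule continuous_imp_measurable_on_sets_lebesgue[OF zeta_gamma_integrand_rotated_continuous_on[OF t]]) simp
  show "(\<lambda>x. ray_const * norm rot_dir powr t * gamma_majorant t x) integrable_on {0..}" using has_integral_mult_right[OF gamma_majorant_has_integral[OF t]] by blast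
  show "norm (zeta_gamma_integrand t (rot_dir * of_real x) * rot_dir) \<le> ray_const * norm rot_dir powr t * gamma_majorant t x" if "x \<in> {0..}" for x
    using norm_zeta_gamma_integrand_rotated_le[OF t] that by simp
qed simp

lemma powr_exp_tendsto_0: "((\<lambda>R::real. R powr a * exp (- R / 2)) \<longlongrightarrow> 0) at_top"
  by real_asymp

lemma rotation_error_tendsto_0: "((\<lambda>R. 2 * R * ((6 + tail_sum (3/2) * (1/2 + R)) * R powr (t - 1) * exp (- R / rot_scale))) \<longlongrightarrow> 0) at_top"
proof (rule tendsto_sandwich[where f = "\<lambda>_. 0"])
  let ?U = "\<lambda>R. (12 + tail_sum (3/2)) * (R powr t * exp (- R / 2)) + 2 * tail_sum (3/2) * (R powr (t + 1) * exp (- R / 2))"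
  show "((\<lambda>R. ?U R) \<longlongrightarrow> 0) at_top"
    using tendsto_add[OF tendsto_mult_right_zero[OF powr_exp_tendsto_0[of t], of "12 + tail_sum (3/2)"]
                         tendsto_mult_right_zero[OF powr_exp_tendsto_0[of "t+1"], of "2 * tail_sum (3/2)"]] by simp
  show "\<forall>\<^sub>F R in at_top. 0 \<le> 2 * R * ((6 + tail_sum (3/2) * (1/2 + R)) * R powr (t - 1) * exp (- R / rot_scale))"
    using eventually_ge_at_top[of 1] by eventually_elim (use tail_sum_nonneg[of "3/2"] in simp)
  show "\<forall>\<^sub>F R in at_top. 2 * R * ((6 + tail_sum (3/2) * (1/2 + R)) * R powr (t - 1) * exp (- R / rot_scale)) \<le> ?U R"
    using eventually_ge_at_top[of 1]
  proof eventually_elim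
    case (elim R)
    have "R / 2 \<le> R / rot_scale" by (rule divide_left_mono) (use elim rot_scale_le rot_scale_pos in auto)
    hence e: "exp (- R / rot_scale) \<le> exp (- R / 2)" by simp
    have p1: "R * R powr (t - 1) = R powr t" using powr_add[of R 1 "t - 1"] elim by simp
    have p2: "R * R powr t = R powr (t + 1)" using powr_add[of R t 1] elim by (simp add: mult.commute)
    have "2 * R * ((6 + tail_sum (3/2) * (1/2 + R)) * R powr (t - 1) * exp (- R / rot_scale))
          = ((12 + tail_sum (3/2)) * (R * R powr (t - 1)) + 2 * tail_sum (3/2) * (R * (R * R powr (t - 1)))) * exp (- R / rot_scale)"
      by (simp add: algebra_simps)
    also have "\<dots> \<le> ((12 + tail_sum (3/2)) * (R * R powr (t - 1)) + 2 * tail_sum (3/2) * (R * (R * R powr (t - 1)))) * exp (- R / 2)"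
      by (intro mult_left_mono e) (use elim tail_sum_nonneg[of "3/2"] in simp)
    also have "\<dots> = ?U R" unfolding p1 p2 by (simp add: algebra_simps)
    finally show ?case .
  qed
qed simp

lemma integral_rotation:
  assumes t: "1 < t"
  shows "integral {0..} (\<lambda>x. zeta_gamma_integrand t (of_real x)) = integral {0..} (\<lambda>x. zeta_gamma_integrand t (rot_dir * of_real x) * rot_dir)"
proof -
  let ?F = "\<lambda>R. integral {0..R} (\<lambda>x. zeta_gamma_integrand t (of_real x)) - integral {0..R} (\<lambda>x. zeta_gamma_integrand t (rot_dir * of_real x) * rot_dir)"
  let ?J = "integral {0..} (\<lambda>x. zeta_gamma_integrand t (of_real x)) - integral {0..} (\<lambda>x. zeta_gamma_integrand t (rot_dir * of_real x) * rot_dir)"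
  have "(?F \<longlongrightarrow> ?J) at_top"
    by (intro tendsto_diff integral_atLeast_tendsto zeta_gamma_integrand_real_absolutely_integrable zeta_gamma_integrand_rotated_absolutely_integrable t)
  hence lim: "((\<lambda>R. norm (?F R)) \<longlongrightarrow> norm ?J) at_top" by (rule tendsto_norm)
  have "norm ?J \<le> 0"
  proof (rule tendsto_le[OF _ rotation_error_tendsto_0 lim])
    show "\<forall>\<^sub>F R in at_top. norm (?F R) \<le> 2 * R * ((6 + tail_sum (3/2) * (1/2 + R)) * R powr (t - 1) * exp (- R / rot_scale))"
      using eventually_ge_at_top[of 1] by eventually_elim (rule norm_integral_diff_rotated_le[OF t])
  qed simp
  thus ?thesis by simp
qed

lemma norm_integral_zeta_gamma_integrand_le:
  assumes t: "1 < t"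
  shows "norm (integral {0..} (\<lambda>x. zeta_gamma_integrand t (of_real x))) \<le> ray_const * norm rot_dir powr t * (Gamma t + Gamma (t + 1))"
proof -
  have i2: "(\<lambda>x. zeta_gamma_integrand t (rot_dir * of_real x) * rot_dir) integrable_on {0..}"
    by (rule set_lebesgue_integral_eq_integral(1)[OF zeta_gamma_integrand_rotated_absolutely_integrable[OF t]])
  have di: "((\<lambda>x. ray_const * norm rot_dir powr t * gamma_majorant t x) has_integral (ray_const * norm rot_dir powr t * (Gamma t + Gamma (t + 1)))) {0..}"
    by (rule has_integral_mult_right[OF gamma_majorant_has_integral[OF t]])
  have "norm (integral {0..} (\<lambda>x. zeta_gamma_integrand t (rot_dir * of_real x) * rot_dir)) \<le> integral {0..} (\<lambda>x. ray_const * norm rot_dir powr t * gamma_majorant t x)"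
    by (rule integral_norm_bound_integral[OF i2]) (use di norm_zeta_gamma_integrand_rotated_le[OF t] in auto)
  also have "\<dots> = ray_const * norm rot_dir powr t * (Gamma t + Gamma (t + 1))" by (rule integral_unique[OF di])
  finally show ?thesis unfolding integral_rotation[OF t] .
qed

section \<open>The expectation\<close>

lemma distributed_integral_density:
  fixes g :: "'b \<Rightarrow> 'c::{banach, second_countable_topology}"
  assumes D: "distributed M N X (\<lambda>x. ennreal (f x))" and f: "f \<in> borel_measurable N"
    and f0: "AE x in N. 0 \<le> f x" and g: "g \<in> borel_measurable N"
  shows "integrable M (\<lambda>\<omega>. g (X \<omega>)) \<longleftrightarrow> integrable N (\<lambda>x. f x *\<^sub>R g x)"
    and "(\<integral>\<omega>. g (X \<omega>) \<partial>M) = (\<integral>x. f x *\<^sub>R g x \<partial>N)"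
proof -
  have X: "X \<in> measurable M N" by (rule distributed_measurable[OF D])
  have dens: "distr M N X = density N (\<lambda>x. ennreal (f x))" by (rule distributed_distr_eq_density[OF D])
  have "integrable M (\<lambda>\<omega>. g (X \<omega>)) \<longleftrightarrow> integrable (distr M N X) g"
    by (rule integrable_distr_eq[symmetric]) (use X g in auto)
  also have "\<dots> \<longleftrightarrow> integrable N (\<lambda>x. f x *\<^sub>R g x)"
    unfolding dens by (rule integrable_density[OF g f f0])
  finally show "integrable M (\<lambda>\<omega>. g (X \<omega>)) \<longleftrightarrow> integrable N (\<lambda>x. f x *\<^sub>R g x)" .
  have "(\<integral>\<omega>. g (X \<omega>) \<partial>M) = integral\<^sup>L (distr M N X) g"
    by (rule integral_distr[symmetric]) (use X g in auto)
  also have "\<dots> = (\<integral>x. f x *\<^sub>R g x \<partial>N)"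
    unfolding dens by (rule integral_density[OF g f f0])
  finally show "(\<integral>\<omega>. g (X \<omega>) \<partial>M) = (\<integral>x. f x *\<^sub>R g x \<partial>N)" .
qed

lemma riemann_zeta_critical_line: "riemann_zeta (1/2 + \<i> * of_real x) = zeta_cont (1/2 + \<i> * of_real x)"
proof (rule riemann_zeta_eq_zeta_cont)
  show "1/2 + \<i> * of_real x \<noteq> 1"
  proof
    assume "1/2 + \<i> * of_real x = 1"
    hence "Re (1/2 + \<i> * of_real x) = Re 1" by simp
    thus False by simp
  qed
qed

lemma zeta_cont_critical_line_continuous: "continuous_on UNIV (\<lambda>x::real. zeta_cont (1/2 + \<i> * of_real x))"
proof (rule continuous_on_compose2[OF holomorphic_on_imp_continuous_on[OF zeta_cont_holomorphic]])
  show "continuous_on UNIV (\<lambda>x::real. 1/2 + \<i> * of_real x)" by (intro continuous_intros)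
  show "(\<lambda>x::real. 1/2 + \<i> * of_real x) ` UNIV \<subseteq> - {1}"
  proof clarsimp
    fix x :: real assume "1/2 + \<i> * of_real x = 1"
    hence "Re (1/2 + \<i> * of_real x) = Re 1" by simp
    thus False by simp
  qed
qed

lemma gamma_density_nonneg: "0 < t \<Longrightarrow> 0 \<le> gamma_density t x"
  unfolding gamma_density_def by simp

lemma gamma_density_borel_measurable: "gamma_density t \<in> borel_measurable borel"
  unfolding gamma_density_def by measurable

lemma gamma_density_scaleR_zeta_minus_1:
  assumes t: "1 < t"
  shows "gamma_density t x *\<^sub>R (zeta_cont (1/2 + \<i> * of_real x) - 1)
         = (1 / Gamma t) *\<^sub>R (indicator {0..} x *\<^sub>R zeta_gamma_integrand t (of_real x))"
proof (cases "0 < x")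
  case True
  have p: "(of_real x :: complex) powr of_real (t - 1) = of_real (x powr (t - 1))"
    using True by (intro powr_of_real) simp
  have e: "exp (- (of_real x :: complex)) = of_real (exp (- x))"
    by (simp flip: exp_of_real)
  have "zeta_gamma_integrand t (of_real x) = (zeta_cont (1/2 + \<i> * of_real x) - 1) * of_real (x powr (t - 1) * exp (- x))"
    unfolding zeta_gamma_integrand_def p e by simp
  thus ?thesis using True by (simp add: gamma_density_def scaleR_conv_of_real field_simps)
next
  case False
  show ?thesis
  proof (cases "x = 0")
    case True thus ?thesis by (simp add: gamma_density_def zeta_gamma_integrand_def)
  next
    case False
    hence "x < 0" using \<open>\<not> 0 < x\<close> by simp
    thus ?thesis by (simp add: gamma_density_def)
  qed
qed

lemma expectation_zeta_minus_1:
  fixes M :: "'a measure" and X :: "'a \<Rightarrow> real"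
  assumes P: "prob_space M" and t: "1 < t"
    and D: "distributed M lborel X (\<lambda>x. ennreal (gamma_density t x))"
  shows "integrable M (\<lambda>\<omega>. riemann_zeta (1/2 + \<i> * complex_of_real (X \<omega>)))"
    and "(\<integral>\<omega>. riemann_zeta (1/2 + \<i> * complex_of_real (X \<omega>)) \<partial>M) - 1
           = (1 / Gamma t) *\<^sub>R integral {0..} (\<lambda>x. zeta_gamma_integrand t (of_real x))"
proof -
  interpret prob_space M by (rule P)
  define d where "d = gamma_density t"
  define Z where "Z x = zeta_cont (1/2 + \<i> * of_real x)" for x :: real
  define g where "g x = zeta_gamma_integrand t (of_real x)" for x :: real
  have dm: "d \<in> borel_measurable lborel" unfolding d_def using gamma_density_borel_measurable by simp
  have dnn: "AE x in lborel. 0 \<le> d x" unfolding d_def using t by (simp add: gamma_density_nonneg)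
  have Zm: "Z \<in> borel_measurable lborel"
    unfolding Z_def using borel_measurable_continuous_onI[OF zeta_cont_critical_line_continuous] by simp
  have onem: "(\<lambda>_. 1::complex) \<in> borel_measurable lborel" by simp
  note transfer = distributed_integral_density[OF D[folded d_def] dm dnn]
  have gabs: "g absolutely_integrable_on {0..}" unfolding g_def by (rule zeta_gamma_integrand_real_absolutely_integrable[OF t])
  have gc: "continuous_on {0..} g" unfolding g_def by (rule zeta_gamma_integrand_real_continuous_on[OF t])
  note ind = lborel_integral_indicator_atLeast[OF gabs gc]
  have pw: "d x *\<^sub>R (Z x - 1) = (1 / Gamma t) *\<^sub>R (indicator {0..} x *\<^sub>R g x)" for x
    unfolding d_def Z_def g_def by (rule gamma_density_scaleR_zeta_minus_1[OF t])
  have int1: "integrable lborel (\<lambda>x. d x *\<^sub>R (Z x - 1))"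
    unfolding pw by (intro integrable_scaleR_right ind(1))
  have int2: "integrable lborel (\<lambda>x. d x *\<^sub>R (1::complex))"
    using transfer(1)[OF onem] by simp
  have intZ: "integrable lborel (\<lambda>x. d x *\<^sub>R Z x)"
    using Bochner_Integration.integrable_add[OF int1 int2] by (simp add: algebra_simps)
  have E1: "(1::complex) = (\<integral>x. d x *\<^sub>R (1::complex) \<partial>lborel)"
  proof -
    have "(\<integral>\<omega>. (1::complex) \<partial>M) = 1" by (simp add: prob_space)
    thus ?thesis using transfer(2)[OF onem] by simp
  qed
  have "(\<integral>\<omega>. Z (X \<omega>) \<partial>M) - 1 = (\<integral>x. d x *\<^sub>R Z x - d x *\<^sub>R (1::complex) \<partial>lborel)"
    unfolding transfer(2)[OF Zm] by (subst E1) (rule Bochner_Integration.integral_diff[OF intZ int2, symmetric])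
  also have "\<dots> = (\<integral>x. d x *\<^sub>R (Z x - 1) \<partial>lborel)" by (simp add: algebra_simps)
  also have "\<dots> = (1 / Gamma t) *\<^sub>R integral {0..} g" by (simp only: pw integral_scaleR_right ind(2))
  finally show "(\<integral>\<omega>. riemann_zeta (1/2 + \<i> * complex_of_real (X \<omega>)) \<partial>M) - 1
           = (1 / Gamma t) *\<^sub>R integral {0..} (\<lambda>x. zeta_gamma_integrand t (of_real x))"
    by (simp add: riemann_zeta_critical_line Z_def g_def[abs_def])
  show "integrable M (\<lambda>\<omega>. riemann_zeta (1/2 + \<i> * complex_of_real (X \<omega>)))"
    using transfer(1)[OF Zm] intZ unfolding riemann_zeta_critical_line Z_def by simp
qed

lemma norm_expectation_zeta_minus_1_le:
  fixes M :: "'a measure" and X :: "'a \<Rightarrow> real"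
  assumes "prob_space M" and t: "1 < t"
    and "distributed M lborel X (\<lambda>x. ennreal (gamma_density t x))"
  shows "cmod ((\<integral>\<omega>. riemann_zeta (1/2 + \<i> * complex_of_real (X \<omega>)) \<partial>M) - 1)
           \<le> ray_const * norm rot_dir powr t * (1 + t)"
proof -
  have Gt: "0 < Gamma t" using t by simp
  have "cmod ((\<integral>\<omega>. riemann_zeta (1/2 + \<i> * complex_of_real (X \<omega>)) \<partial>M) - 1)
        = norm (integral {0..} (\<lambda>x. zeta_gamma_integrand t (of_real x))) / Gamma t"
    unfolding expectation_zeta_minus_1(2)[OF assms] using Gt by simp
  also have "\<dots> \<le> ray_const * norm rot_dir powr t * (Gamma t + Gamma (t + 1)) / Gamma t"
    by (rule divide_right_mono[OF norm_integral_zeta_gamma_integrand_le[OF t]]) (use Gt in simp)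
  also have "\<dots> = ray_const * norm rot_dir powr t * (1 + t)"
  proof -
    have "Gamma (t + 1) = t * Gamma t" by (rule Gamma_plus1) (use t in \<open>auto simp: nonpos_Ints_def\<close>)
    thus ?thesis using Gt by (simp add: field_simps)
  qed
  finally show ?thesis .
qed

lemma rot_dir_powr_decay: "\<forall>\<^sub>F t in at_top. norm rot_dir powr t * (1 + t) \<le> t powr (- real N)"
proof -
  have le: "norm rot_dir powr t \<le> (9/10) powr t" if "0 \<le> t" for t
    by (rule powr_mono2) (use that norm_rot_dir_le norm_rot_dir_pos in auto)
  have "\<forall>\<^sub>F t in at_top. (1 + t) * (9/10) powr t \<le> t powr (- real N)" by real_asymp
  with eventually_ge_at_top[of 0] show ?thesis
  proof eventually_elim
    case (elim t)
    have "norm rot_dir powr t * (1 + t) \<le> (9/10) powr t * (1 + t)"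
      by (rule mult_right_mono[OF le]) (use elim in auto)
    with elim(2) show ?case by (simp add: mult.commute)
  qed
qed

theorem lemma3p2:
  fixes M :: "'a measure" and X :: "real \<Rightarrow> 'a \<Rightarrow> real"
  assumes "prob_space M"
    and "\<And>t. 0 < t \<Longrightarrow> distributed M lborel (X t) (\<lambda>x. ennreal (gamma_density t x))"
  shows "\<forall>N::nat. \<exists>C::real. \<forall>\<^sub>F t in at_top.
           integrable M (\<lambda>\<omega>. riemann_zeta (1/2 + \<i> * complex_of_real (X t \<omega>))) \<and>
           cmod ((\<integral>\<omega>. riemann_zeta (1/2 + \<i> * complex_of_real (X t \<omega>)) \<partial>M) - 1)
             \<le> C * t powr (- real N)"
proof (intro allI exI)
  fix N :: nat
  show "\<forall>\<^sub>F t in at_top.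
          integrable M (\<lambda>\<omega>. riemann_zeta (1/2 + \<i> * complex_of_real (X t \<omega>))) \<and>
          cmod ((\<integral>\<omega>. riemann_zeta (1/2 + \<i> * complex_of_real (X t \<omega>)) \<partial>M) - 1)
            \<le> ray_const * t powr (- real N)"
    using eventually_gt_at_top[of 1] rot_dir_powr_decay[of N]
  proof eventually_elim
    case (elim t)
    hence t: "1 < t" by simp
    have D: "distributed M lborel (X t) (\<lambda>x. ennreal (gamma_density t x))" using assms(2) t by simp
    have "ray_const * norm rot_dir powr t * (1 + t) \<le> ray_const * t powr (- real N)"
      using mult_left_mono[OF elim(2) ray_const_nonneg] by (simp add: mult.assoc)
    with norm_expectation_zeta_minus_1_le[OF assms(1) t D] expectation_zeta_minus_1(1)[OF assms(1) t D]
    show ?case by simp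
  qed
qed

end
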